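(* Let $T=\{\!\{T_1,\dots,T_m\}\!\}$ where each $T_j$ is a $G_j$-join tree with $G_j$ a finite subgraph of $\mathsf{Path}_{\mathbb Z}$. Then for every shift permutation $\sigma$ of $[m]$ and every $h\in[m]$: (i) $\Psi(T)\ge\Psi(T_{\sigma(1)})+\vec\Delta(G_{\sigma(2)},\dots,G_{\sigma(m)}\mid G_{\sigma(1)})$; (ii) $\Psi(T)\ge\Psi(T_{\sigma(h)})+\vec\Delta(G_{\sigma(h+1)},\dots,G_{\sigma(m)}\mid G_{\sigma(1)}\cup\dots\cup G_{\sigma(h)})$; (iii) $\Psi(T)\ge\Psi(T_j\ominus F_j)-\Delta(G_j\ominus F_j)+\vec\Delta(G_{\tilde\sigma_j(1)},\dots,G_{\tilde\sigma_j(m)})$, where $j:=\sigma(h)$ and $F_j:=G_{\sigma(1)}\cup\dots\cup G_{\sigma(h-1)}$.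
   Context: Graphs are finite simple graphs without isolated vertices; $\emptyset$ is the empty graph. $\mathsf{Path}_{\mathbb Z}$ has vertex set $\mathbb Z$ and edges $\{i-1,i\}$. $\Delta(G)$ = number of connected components; $G\ominus F$ = union of components of $G$ sharing no vertex with $F$; $\vec\Delta(H_1,\dots,H_r\mid F)=\sum_{l=1}^r\Delta(H_l\ominus(F\cup H_1\cup\dots\cup H_{l-1}))$ and $\vec\Delta(H_1,\dots,H_r)=\vec\Delta(H_1,\dots,H_r\mid\emptyset)$. Join trees: for finite $G\subset\mathsf{Path}_{\mathbb Z}$, a $G$-join tree is a finite rooted binary tree (each non-leaf has an ordered left and right child) with nodes labeled by subgraphs of $G$: leaves by single-edge subgraphs of $G$ or $\emptyset$, each non-leaf by the union of its children's labels, the root by $G$. $T_1\cup T_2$ is the join tree with a new root whose left subtree is $T_1$ and right subtree $T_2$. $\{\!\{T_1\}\!\}=T_1$ and $\{\!\{T_1,\dots,T_m\}\!\}=\{\!\{T_1,\dots,T_{m-1}\}\!\}\cup\{\!\{T_1,\dots,T_{m-2},T_m\}\!\}$ for $m\ge2$. For a $G$-join tree $S$ and a graph $F$, $S\ominus F$ is the $(G\ominus F)$-join tree obtained from $S$ by relabeling to $\emptyset$ every leaf whose label is an edge not in $G\ominus F$ (and relabeling each non-leaf by the union of its children's labels). Branch coverings and $\Psi$: for a $G$-join tree $S$ and a root-to-leaf path $b_1,\dots,b_\ell$, let $B_j$ ($j<\ell$) be the label of the child of $b_j$ other than $b_{j+1}$, and $B_\ell$ the label of leaf $b_\ell$; $\{B_1,\dots,B_\ell\}$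 is an $S$-branch covering. $\Psi(S)$ is the maximum of $\vec\Delta(C_1,\dots,C_r)$ over all $S$-branch coverings $\mathcal C$ and all enumerations $C_1,\dots,C_r$ (without repetition) of $\mathcal C$. Shift permutations: a permutation $\sigma$ of $[m]$ with $\sigma(j)\ge j-1$ for all $j$. For $I\subseteq[m]$ with $m\in I$, $I=\{i_1<\dots<i_p\}$, $i_0:=0$, let $\sigma_I(j)=i_h$ if $j=i_{h-1}+1$ for some $h$, and $\sigma_I(j)=j-1$ otherwise; every shift permutation equals $\sigma_I$ for exactly one such $I$. For $\sigma=\sigma_I$ and $j\in[m]$, $\tilde\sigma_j:=\sigma_{\tilde I_j}$ with $\tilde I_j=I\cup[i_{h-1}]$ if $j=i_h\in I$ and $\tilde I_j=I\cup[j-1]$ if $j\notin I$. *)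

theory Defs
  imports "HOL-Combinatorics.Permutations"
begin

text \<open>A finite simple graph without isolated vertices is represented by its edge set;
  each edge is a 2-element vertex set.  The empty graph is the empty edge set.\<close>

type_synonym graph = "int set set"

definition path_Z :: graph where
  "path_Z = {{i - 1, i} | i. True}"

definition subgraph_of_path :: "graph \<Rightarrow> bool" where
  "subgraph_of_path G \<longleftrightarrow> finite G \<and> G \<subseteq> path_Z"

definition verts :: "graph \<Rightarrow> int set" where
  "verts G = \<Union> G"

definition edge_adj :: "graph \<Rightarrow> (int set \<times> int set) set" where
  "edge_adj G = {(e, f). e \<in> G \<and> f \<in> G \<and> e \<inter> f \<noteq> {}}"

definition components :: "graph \<Rightarrow> graph set" where
  "components G = G // ((edge_adj G)\<^sup>*)"

definition n_comp :: "graph \<Rightarrow> nat" where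
  "n_comp G = card (components G)"

definition gminus :: "graph \<Rightarrow> graph \<Rightarrow> graph" where
  "gminus G F = \<Union> {C \<in> components G. verts C \<inter> verts F = {}}"

fun dvec_c :: "graph \<Rightarrow> graph list \<Rightarrow> nat" where
  "dvec_c F [] = 0"
| "dvec_c F (H # Hs) = n_comp (gminus H F) + dvec_c (F \<union> H) Hs"

definition dvec :: "graph list \<Rightarrow> nat" where
  "dvec Hs = dvec_c {} Hs"

datatype jtree = Leaf graph | Node jtree jtree

fun label :: "jtree \<Rightarrow> graph" where
  "label (Leaf E) = E"
| "label (Node a b) = label a \<union> label b"

fun leaf_labels :: "jtree \<Rightarrow> graph set" where
  "leaf_labels (Leaf E) = {E}"
| "leaf_labels (Node a b) = leaf_labels a \<union> leaf_labels b"

definition join_tree :: "graph \<Rightarrow> jtree \<Rightarrow> bool" where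
  "join_tree G S \<longleftrightarrow> (\<forall>L \<in> leaf_labels S. L = {} \<or> (\<exists>e \<in> G. L = {e})) \<and> label S = G"

function multi_join :: "jtree list \<Rightarrow> jtree" where
  "multi_join [] = Leaf {}"
| "multi_join [t] = t"
| "multi_join (t # u # ts) =
     Node (multi_join (butlast (t # u # ts)))
          (multi_join (butlast (butlast (t # u # ts)) @ [last (t # u # ts)]))"
  by pat_completeness auto
termination by (relation "measure length") auto

fun restrict_leaves :: "graph \<Rightarrow> jtree \<Rightarrow> jtree" where
  "restrict_leaves K (Leaf E) = Leaf (E \<inter> K)"
| "restrict_leaves K (Node a b) = Node (restrict_leaves K a) (restrict_leaves K b)"

definition tminus :: "jtree \<Rightarrow> graph \<Rightarrow> jtree" where
  "tminus S F = restrict_leaves (gminus (label S) F) S"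

text \<open>Branch coverings: for each root-to-leaf path, the set of labels of the siblings along
  the path together with the label of the final leaf.\<close>
fun branch_coverings :: "jtree \<Rightarrow> graph set set" where
  "branch_coverings (Leaf E) = {{E}}"
| "branch_coverings (Node a b) =
     {insert (label b) C | C. C \<in> branch_coverings a} \<union>
     {insert (label a) C | C. C \<in> branch_coverings b}"

definition Psi :: "jtree \<Rightarrow> nat" where
  "Psi S = Max {dvec Cs | Cs C. C \<in> branch_coverings S \<and> distinct Cs \<and> set Cs = C}"

definition shift_perm :: "nat \<Rightarrow> (nat \<Rightarrow> nat) \<Rightarrow> bool" where
  "shift_perm m \<sigma> \<longleftrightarrow> \<sigma> permutes {1..m} \<and> (\<forall>j \<in> {1..m}. \<sigma> j \<ge> j - 1)"

text \<open>With \<open>I = {i_1 < ... < i_p}\<close> and \<open>i_0 = 0\<close>, the list \<open>0 # sorted_list_of_set I\<close>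
  is \<open>[i_0, i_1, ..., i_p]\<close>.\<close>
definition sigma_I :: "nat set \<Rightarrow> nat \<Rightarrow> nat" where
  "sigma_I I j = (let xs = 0 # sorted_list_of_set I in
     if \<exists>h. 1 \<le> h \<and> h < length xs \<and> j = xs ! (h - 1) + 1
     then xs ! (THE h. 1 \<le> h \<and> h < length xs \<and> j = xs ! (h - 1) + 1)
     else j - 1)"

definition index_set :: "nat \<Rightarrow> (nat \<Rightarrow> nat) \<Rightarrow> nat set" where
  "index_set m \<sigma> = (THE I. I \<subseteq> {1..m} \<and> m \<in> I \<and> (\<forall>j \<in> {1..m}. \<sigma> j = sigma_I I j))"

definition tilde_I :: "nat set \<Rightarrow> nat \<Rightarrow> nat set" where
  "tilde_I I j = (let xs = 0 # sorted_list_of_set I in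
     if j \<in> I then I \<union> {1 .. xs ! ((THE h. 1 \<le> h \<and> h < length xs \<and> xs ! h = j) - 1)}
     else I \<union> {1 .. j - 1})"

definition sigma_tilde :: "nat \<Rightarrow> (nat \<Rightarrow> nat) \<Rightarrow> nat \<Rightarrow> (nat \<Rightarrow> nat)" where
  "sigma_tilde m \<sigma> j = sigma_I (tilde_I (index_set m \<sigma>) j)"

end

(*
  Descending from the root of {{T_1,...,T_m}}, the child containing a given copy of T_j is again
  an iterated join of m - 1 of the trees, and the sibling left behind is a union of trees.
  Dropping the trees in the order given by a shift permutation sigma, the sibling left at level
  k > h is T_(sigma k) together with trees counted before, so the siblings along a branch through
  T_(sigma h) add Delta(G_(sigma (h+1)), ..., G_(sigma m) | G_(sigma 1) u ... u G_(sigma h))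
  components to those of any branch covering of T_(sigma h): this gives (i) and (ii).
  For (iii), the shape of sigma~_j on {1..h} lets the part of the branch above the copy of T_j
  reproduce Delta(G_(sigma~ 1), ..., G_(sigma~ (h-1))) as well, and a branch covering of
  T_j (-) F_j is the trace of a branch covering of T_j with at least as many components relative
  to F_j; exchanging it for the term Delta(G_j (-) F_j) of the enumeration costs the correction.
*)
theory Submission
  imports Defs
begin

section \<open>Components\<close>

definition component_of :: "graph \<Rightarrow> int set \<Rightarrow> graph" where
  "component_of H e = (edge_adj H)\<^sup>* `` {e}"

definition vertex_disjoint :: "graph \<Rightarrow> graph \<Rightarrow> bool" where
  "vertex_disjoint C U \<longleftrightarrow> verts C \<inter> verts U = {}"

lemma components_eq_image: "components H = component_of H ` H"
  by (auto simp: components_def quotient_def component_of_def)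

lemma finite_components: "finite H \<Longrightarrow> finite (components H)"
  by (simp add: components_eq_image)

lemma component_of_refl: "e \<in> component_of H e"
  by (simp add: component_of_def)

lemma component_of_eq:
  assumes "f \<in> component_of H e"
  shows "component_of H f = component_of H e"
proof -
  have "sym ((edge_adj H)\<^sup>*)"
    by (intro sym_rtrancl) (auto simp: sym_def edge_adj_def)
  moreover have "(e, f) \<in> (edge_adj H)\<^sup>*"
    using assms by (simp add: component_of_def)
  ultimately have "(f, e) \<in> (edge_adj H)\<^sup>*"
    by (auto simp: sym_def)
  with \<open>(e, f) \<in> _\<close> show ?thesis
    unfolding component_of_def by (blast dest: rtrancl_trans)
qed

lemma component_of_adj:
  "f \<in> component_of H e \<Longrightarrow> (f, g) \<in> edge_adj H \<Longrightarrow> g \<in> component_of H e"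
  by (auto simp: component_of_def intro: rtrancl_into_rtrancl)

lemma component_of_least:
  assumes "e \<in> S" and closed: "\<And>f g. f \<in> S \<Longrightarrow> (f, g) \<in> edge_adj H \<Longrightarrow> g \<in> S"
  shows "component_of H e \<subseteq> S"
proof
  fix g assume "g \<in> component_of H e"
  then have "(e, g) \<in> (edge_adj H)\<^sup>*"
    by (simp add: component_of_def)
  then show "g \<in> S"
  proof (induction rule: rtrancl_induct)
    case (step f g)
    then show ?case using closed by blast
  qed (rule \<open>e \<in> S\<close>)
qed

lemma component_of_subset: "e \<in> H \<Longrightarrow> component_of H e \<subseteq> H"
  by (rule component_of_least) (auto simp: edge_adj_def)

lemma component_of_mono:
  assumes "H \<subseteq> H'"
  shows "component_of H e \<subseteq> component_of H' e"
proof (rule component_of_least[OF component_of_refl])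
  fix f g assume "f \<in> component_of H' e" "(f, g) \<in> edge_adj H"
  moreover have "edge_adj H \<subseteq> edge_adj H'"
    using assms by (auto simp: edge_adj_def)
  ultimately show "g \<in> component_of H' e"
    using component_of_adj by blast
qed

lemma component_of_restrict:
  assumes "H' \<subseteq> H" and "component_of H e \<subseteq> H'"
  shows "component_of H' e = component_of H e"
proof
  show "component_of H' e \<subseteq> component_of H e"
    using assms(1) by (rule component_of_mono)
  have closed: "g \<in> component_of H' e"
    if "f \<in> component_of H' e" "f \<in> component_of H e" "(f, g) \<in> edge_adj H" for f g
  proof -
    have "g \<in> component_of H e"
      using that(2,3) by (rule component_of_adj)
    then have "(f, g) \<in> edge_adj H'"
      using that(2,3) assms(2) by (auto simp: edge_adj_def)
    then show ?thesis
      by (rule component_of_adj[OF that(1)])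
  qed
  have "component_of H e \<subseteq> component_of H e \<inter> component_of H' e"
    by (rule component_of_least) (auto simp: component_of_refl intro: component_of_adj closed)
  then show "component_of H e \<subseteq> component_of H' e"
    by blast
qed

lemma vertex_disjoint_subset: "vertex_disjoint C U \<Longrightarrow> C' \<subseteq> C \<Longrightarrow> vertex_disjoint C' U"
  by (auto simp: vertex_disjoint_def verts_def)

lemma mem_gminus_iff: "e \<in> gminus H U \<longleftrightarrow> e \<in> H \<and> vertex_disjoint (component_of H e) U"
proof
  assume "e \<in> gminus H U"
  then obtain x where x: "x \<in> H" "e \<in> component_of H x" "vertex_disjoint (component_of H x) U"
    by (auto simp: gminus_def components_eq_image vertex_disjoint_def)
  then show "e \<in> H \<and> vertex_disjoint (component_of H e) U"
    using component_of_eq[OF x(2)] component_of_subset[OF x(1)] by auto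
next
  assume "e \<in> H \<and> vertex_disjoint (component_of H e) U"
  then show "e \<in> gminus H U"
    using component_of_refl[of e H]
    by (auto simp: gminus_def components_eq_image vertex_disjoint_def)
qed

lemma gminus_subset: "gminus H U \<subseteq> H"
  using mem_gminus_iff by blast

lemma component_of_subset_gminus:
  assumes "e \<in> gminus H U"
  shows "component_of H e \<subseteq> gminus H U"
proof
  fix f assume f: "f \<in> component_of H e"
  have "e \<in> H" "vertex_disjoint (component_of H e) U"
    using assms by (auto simp: mem_gminus_iff)
  then show "f \<in> gminus H U"
    using f component_of_eq[OF f] component_of_subset by (auto simp: mem_gminus_iff)
qed

lemma components_gminus:
  "components (gminus H U) = {C \<in> components H. vertex_disjoint C U}"
proof -
  have eq: "component_of (gminus H U) e = component_of H e" if "e \<in> gminus H U" for e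
    using component_of_restrict[OF gminus_subset component_of_subset_gminus[OF that]] .
  have "component_of (gminus H U) ` gminus H U = component_of H ` gminus H U"
    using eq by (rule image_cong[OF refl])
  also have "\<dots> = {C \<in> component_of H ` H. vertex_disjoint C U}"
  proof (intro set_eqI iffI)
    fix C assume "C \<in> component_of H ` gminus H U"
    then show "C \<in> {C \<in> component_of H ` H. vertex_disjoint C U}"
      by (auto simp: mem_gminus_iff)
  next
    fix C assume "C \<in> {C \<in> component_of H ` H. vertex_disjoint C U}"
    then obtain e where "e \<in> H" "C = component_of H e" "vertex_disjoint C U"
      by blast
    then show "C \<in> component_of H ` gminus H U"
      by (auto simp: mem_gminus_iff)
  qed
  finally show ?thesis
    by (simp add: components_eq_image)
qed

lemma n_comp_gminus: "n_comp (gminus H U) = card {C \<in> components H. vertex_disjoint C U}"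
  by (simp add: n_comp_def components_gminus)

lemma gminus_eq_empty:
  assumes "H \<subseteq> U" and "{} \<notin> H"
  shows "gminus H U = {}"
proof -
  have False if "e \<in> gminus H U" for e
  proof -
    have "e \<in> H" "vertex_disjoint (component_of H e) U"
      using that by (auto simp: mem_gminus_iff)
    moreover have "e \<subseteq> verts (component_of H e)"
      using component_of_refl[of e H] unfolding verts_def by blast
    moreover have "e \<subseteq> verts U" "e \<noteq> {}"
      using assms \<open>e \<in> H\<close> unfolding verts_def by blast+
    ultimately show False
      unfolding vertex_disjoint_def by blast
  qed
  then show ?thesis by blast
qed

lemma n_comp_gminus_eq_0: "H \<subseteq> U \<Longrightarrow> {} \<notin> H \<Longrightarrow> n_comp (gminus H U) = 0"
  by (simp add: gminus_eq_empty n_comp_def components_def)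

text \<open>Edges inside \<open>U\<close> neither survive in \<open>H \<ominus> U\<close> nor merge the components avoiding \<open>U\<close>.\<close>
lemma gminus_Un_absorb:
  assumes "A \<subseteq> U" and "{} \<notin> A"
  shows "gminus (A \<union> H) U = gminus H U"
proof (intro set_eqI iffI)
  fix e assume "e \<in> gminus (A \<union> H) U"
  then have e: "e \<in> A \<union> H" "vertex_disjoint (component_of (A \<union> H) e) U"
    by (auto simp: mem_gminus_iff)
  have "e \<subseteq> verts (component_of (A \<union> H) e)"
    using component_of_refl[of e] unfolding verts_def by blast
  moreover have "e \<subseteq> verts U" "e \<noteq> {}" if "e \<in> A"
    using that assms unfolding verts_def by blast+
  ultimately have "e \<notin> A"
    using e(2) unfolding vertex_disjoint_def by blast
  then show "e \<in> gminus H U"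
    using e vertex_disjoint_subset component_of_mono[of H "A \<union> H" e]
    by (auto simp: mem_gminus_iff)
next
  fix e assume "e \<in> gminus H U"
  then have e: "e \<in> H" "vertex_disjoint (component_of H e) U"
    by (auto simp: mem_gminus_iff)
  have "g \<in> component_of H e"
    if "f \<in> component_of H e" "(f, g) \<in> edge_adj (A \<union> H)" for f g
  proof -
    have "g \<notin> A"
      using that e(2) assms(1) by (auto simp: edge_adj_def vertex_disjoint_def verts_def)
    then have "(f, g) \<in> edge_adj H"
      using that component_of_subset[OF e(1)] by (auto simp: edge_adj_def)
    then show ?thesis
      by (rule component_of_adj[OF that(1)])
  qed
  then have "component_of (A \<union> H) e = component_of H e"
    by (intro antisym component_of_least component_of_mono) (auto simp: component_of_refl)
  then show "e \<in> gminus (A \<union> H) U"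
    using e by (auto simp: mem_gminus_iff)
qed

text \<open>A component of \<open>X \<inter> K\<close> avoiding \<open>P \<inter> K\<close> is a component of \<open>X\<close> avoiding \<open>F \<union> P\<close>,
  because \<open>K = G \<ominus> F\<close> is closed under adjacency in \<open>G\<close>.\<close>
lemma n_comp_gminus_restrict:
  fixes F :: graph
  assumes "finite G" and "X \<subseteq> G" and "P \<subseteq> G"
  defines "K \<equiv> gminus G F"
  shows "n_comp (gminus (X \<inter> K) (P \<inter> K)) \<le> n_comp (gminus X (F \<union> P))"
proof -
  have "C \<in> components X \<and> vertex_disjoint C (F \<union> P)"
    if C_comp: "C \<in> components (X \<inter> K)" and C_disj: "vertex_disjoint C (P \<inter> K)" for C
  proof -
    obtain e where e: "e \<in> X" "e \<in> K" and C: "C = component_of (X \<inter> K) e"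
      using C_comp unfolding components_eq_image by blast
    have GK: "component_of G e \<subseteq> K"
      using e(2) unfolding K_def by (rule component_of_subset_gminus)
    have CG: "C \<subseteq> component_of G e"
      using C component_of_mono[of "X \<inter> K" G e] assms(2) by auto
    have "component_of X e \<subseteq> X \<inter> K"
      using component_of_mono[OF assms(2), of e] GK component_of_subset[OF e(1)] by auto
    then have CX: "C = component_of X e"
      using C component_of_restrict[of "X \<inter> K" X e] by auto
    have "vertex_disjoint C F"
      using e(2) CG vertex_disjoint_subset by (auto simp: K_def mem_gminus_iff)
    moreover have "vertex_disjoint C P"
      unfolding vertex_disjoint_def
    proof (rule ccontr)
      assume "verts C \<inter> verts P \<noteq> {}"
      then obtain c p where cp: "c \<in> C" "p \<in> P" "c \<inter> p \<noteq> {}"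
        by (auto simp: verts_def)
      then have "(c, p) \<in> edge_adj G"
        using CG component_of_subset[of e G] e assms(2,3) by (auto simp: edge_adj_def)
      then have "p \<in> K"
        using GK CG cp(1) component_of_adj by blast
      with cp C_disj show False
        by (auto simp: vertex_disjoint_def verts_def)
    qed
    ultimately show ?thesis
      using CX e(1) by (auto simp: components_eq_image vertex_disjoint_def verts_def)
  qed
  then have "{C \<in> components (X \<inter> K). vertex_disjoint C (P \<inter> K)}
      \<subseteq> {C \<in> components X. vertex_disjoint C (F \<union> P)}"
    by blast
  moreover have "finite (components X)"
    using assms(1,2) finite_subset finite_components by blast
  ultimately show ?thesis
    unfolding n_comp_gminus by (auto intro: card_mono)
qed

section \<open>Counting components along an enumeration\<close>

lemma dvec_c_append: "dvec_c F (xs @ ys) = dvec_c F xs + dvec_c (F \<union> \<Union>(set xs)) ys"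
  by (induction xs arbitrary: F) (auto simp: Un_assoc)

lemma dvec_c_snoc: "dvec_c F (xs @ [X]) = dvec_c F xs + n_comp (gminus X (F \<union> \<Union>(set xs)))"
  by (simp add: dvec_c_append)

lemma dvec_c_snoc_absorb:
  assumes "A \<subseteq> F \<union> \<Union>(set xs)" and "{} \<notin> A"
  shows "dvec_c F (xs @ [A \<union> X]) = dvec_c F xs + n_comp (gminus X (F \<union> \<Union>(set xs)))"
  using assms by (simp add: dvec_c_snoc gminus_Un_absorb)

lemma dvec_c_le_append: "dvec_c F xs \<le> dvec_c F (xs @ ys)"
  by (simp add: dvec_c_append)

lemma dvec_c_map_Suc:
  assumes "h \<le> n"
  shows "dvec_c (\<Union>i\<in>{1..h}. f i) (map f [h+1..<Suc n+1])
    = dvec_c (\<Union>i\<in>{1..h}. f i) (map f [h+1..<n+1]) + n_comp (gminus (f (Suc n)) (\<Union>i\<in>{1..n}. f i))"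
proof -
  have "set [h+1..<n+1] = {h+1..n}"
    by auto
  then have "(\<Union>i\<in>{1..h}. f i) \<union> \<Union>(set (map f [h+1..<n+1])) = (\<Union>i\<in>{1..h} \<union> {h+1..n}. f i)"
    by (simp add: UN_Un)
  also have "{1..h} \<union> {h+1..n} = {1..n}"
    using assms by auto
  finally have "(\<Union>i\<in>{1..h}. f i) \<union> \<Union>(set (map f [h+1..<n+1])) = (\<Union>i\<in>{1..n}. f i)" .
  moreover have "[h+1..<Suc n+1] = [h+1..<n+1] @ [Suc n]"
    using assms by simp
  ultimately show ?thesis
    by (simp add: dvec_c_snoc)
qed

text \<open>\<open>rev (remdups (rev xs))\<close> keeps the first occurrences; a repeated entry lies inside the
  union of its predecessors and so contributes no component.\<close>
lemma dvec_c_remdups_first: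
  assumes "\<forall>X\<in>set xs. {} \<notin> X"
  shows "dvec_c F (rev (remdups (rev xs))) = dvec_c F xs"
  using assms
proof (induction xs rule: rev_induct)
  case (snoc x xs)
  have IH: "dvec_c F (rev (remdups (rev xs))) = dvec_c F xs"
    using snoc by simp
  show ?case
  proof (cases "x \<in> set xs")
    case True
    then have "n_comp (gminus x (F \<union> \<Union>(set xs))) = 0"
      using snoc.prems by (intro n_comp_gminus_eq_0) auto
    with True IH show ?thesis
      by (simp add: dvec_c_snoc)
  next
    case False
    with IH show ?thesis
      by (simp add: dvec_c_snoc)
  qed
qed simp

lemma dvec_c_restrict:
  assumes "finite G" and "\<forall>X\<in>set L. X \<subseteq> G" and "P \<subseteq> G"
  shows "dvec_c (P \<inter> gminus G F) (map (\<lambda>X. X \<inter> gminus G F) L) \<le> dvec_c (F \<union> P) L"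
  using assms(2,3)
proof (induction L arbitrary: P)
  case (Cons X L)
  let ?K = "gminus G F"
  have "n_comp (gminus (X \<inter> ?K) (P \<inter> ?K)) \<le> n_comp (gminus X (F \<union> P))"
    using Cons.prems by (intro n_comp_gminus_restrict[OF assms(1)]) auto
  moreover have "dvec_c ((P \<union> X) \<inter> ?K) (map (\<lambda>X. X \<inter> ?K) L) \<le> dvec_c (F \<union> (P \<union> X)) L"
    using Cons by simp
  ultimately show ?case
    by (simp add: Int_Un_distrib2 Un_assoc)
qed simp

section \<open>Branch coverings\<close>

lemma Union_branch_covering: "C \<in> branch_coverings S \<Longrightarrow> \<Union>C = label S"
  by (induction S arbitrary: C) auto

lemma finite_branch_coverings: "finite (branch_coverings S)"
  by (induction S) auto

lemma finite_branch_covering: "C \<in> branch_coverings S \<Longrightarrow> finite C"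
  by (induction S arbitrary: C) auto

lemma branch_coverings_nonempty: "branch_coverings S \<noteq> {}"
  by (induction S) auto

lemma finite_Psi_values:
  "finite {dvec Cs | Cs C. C \<in> branch_coverings S \<and> distinct Cs \<and> set Cs = C}"
proof -
  have "finite {Cs. set Cs \<subseteq> \<Union>(branch_coverings S) \<and> distinct Cs}"
    using finite_branch_coverings finite_branch_covering by (simp add: finite_subset_distinct)
  then show ?thesis
    by (rule finite_surj[where f = dvec]) auto
qed

lemma dvec_le_Psi:
  assumes "set L \<in> branch_coverings S" and "{} \<notin> label S"
  shows "dvec L \<le> Psi S"
proof -
  let ?Cs = "rev (remdups (rev L))"
  have "\<forall>X\<in>set L. {} \<notin> X"
    using assms Union_branch_covering by blast
  then have "dvec L = dvec ?Cs"
    by (simp add: dvec_def dvec_c_remdups_first)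
  also have "\<dots> \<le> Psi S"
    unfolding Psi_def using assms(1)
    by (intro Max_ge[OF finite_Psi_values]) auto
  finally show ?thesis .
qed

lemma Psi_attained: "\<exists>Cs. set Cs \<in> branch_coverings S \<and> dvec Cs = Psi S"
proof -
  obtain C where C: "C \<in> branch_coverings S"
    using branch_coverings_nonempty by blast
  then obtain Cs where "set Cs = C" "distinct Cs"
    using finite_branch_covering finite_distinct_list by blast
  with C have "Psi S \<in> {dvec Cs | Cs C. C \<in> branch_coverings S \<and> distinct Cs \<and> set Cs = C}"
    unfolding Psi_def by (intro Max_in[OF finite_Psi_values]) auto
  then show ?thesis
    by auto
qed

lemma label_restrict_leaves: "label (restrict_leaves K S) = label S \<inter> K"
  by (induction S) auto

lemma branch_coverings_restrict_leaves:
  "branch_coverings (restrict_leaves K S) = (\<lambda>C. (\<lambda>X. X \<inter> K) ` C) ` branch_coverings S"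
proof (induction S)
  case (Node a b)
  have ins: "{insert x C | C. C \<in> A} = insert x ` A" for x and A :: "graph set set"
    by blast
  show ?case
    by (simp only: branch_coverings.simps restrict_leaves.simps Node label_restrict_leaves
        ins image_Un image_image image_insert Int_Un_distrib2)
qed simp

text \<open>Every branch covering of \<open>S \<ominus> F\<close> is the trace on \<open>label S \<ominus> F\<close> of a branch covering
  of \<open>S\<close>, and the trace has no more components than the original has relative to \<open>F\<close>.\<close>
lemma Psi_tminus_le:
  assumes "finite (label S)"
  shows "\<exists>B. set B \<in> branch_coverings S \<and> Psi (tminus S F) \<le> dvec_c F B"
proof -
  define K where "K = gminus (label S) F"
  obtain Cs where Cs: "set Cs \<in> branch_coverings (restrict_leaves K S)" "dvec Cs = Psi (tminus S F)"
    using Psi_attained unfolding tminus_def K_def by blast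
  then obtain C where C: "C \<in> branch_coverings S" "set Cs = (\<lambda>X. X \<inter> K) ` C"
    unfolding branch_coverings_restrict_leaves by blast
  define Bs where "Bs = map (inv_into C (\<lambda>X. X \<inter> K)) Cs"
  have inv: "inv_into C (\<lambda>X. X \<inter> K) Y \<in> C" "inv_into C (\<lambda>X. X \<inter> K) Y \<inter> K = Y"
    if "Y \<in> set Cs" for Y
    using that C(2) by (metis inv_into_into, metis f_inv_into_f)
  have Bs_trace: "map (\<lambda>X. X \<inter> K) Bs = Cs"
    unfolding Bs_def map_map by (rule map_idI) (simp add: inv(2))
  obtain Cl where Cl: "set Cl = C"
    using finite_list[OF finite_branch_covering[OF C(1)]] by blast
  have B: "set (Bs @ Cl) = C"
    using inv(1) Cl by (auto simp: Bs_def)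
  then have sub: "\<forall>X\<in>set (Bs @ Cl). X \<subseteq> label S"
    using Union_branch_covering[OF C(1)] by blast
  have "Psi (tminus S F) \<le> dvec_c {} (Cs @ map (\<lambda>X. X \<inter> K) Cl)"
    using Cs(2) dvec_c_le_append unfolding dvec_def by metis
  also have "\<dots> = dvec_c ({} \<inter> K) (map (\<lambda>X. X \<inter> K) (Bs @ Cl))"
    using Bs_trace by simp
  also have "\<dots> \<le> dvec_c (F \<union> {}) (Bs @ Cl)"
    unfolding K_def using dvec_c_restrict[OF assms sub] by blast
  finally show ?thesis
    using B C(1) by (metis sup_bot_right)
qed

section \<open>Iterated joins\<close>

abbreviation join_all :: "(nat \<Rightarrow> jtree) \<Rightarrow> nat \<Rightarrow> jtree" where
  "join_all T m \<equiv> multi_join (map T [1..<m+1])"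

lemma multi_join_Node:
  "2 \<le> length ts \<Longrightarrow>
    multi_join ts = Node (multi_join (butlast ts)) (multi_join (butlast (butlast ts) @ [last ts]))"
  by (cases ts rule: multi_join.cases) auto

lemma join_all_Suc:
  assumes "1 \<le> n"
  shows "join_all T (Suc n) = Node (join_all T n) (join_all (T(n := T (Suc n))) n)"
proof -
  have len: "2 \<le> length (map T [1..<Suc n + 1])"
    using assms by simp
  have left: "butlast (map T [1..<Suc n + 1]) = map T [1..<n + 1]"
    by (simp add: map_butlast[symmetric])
  have split: "[1..<n + 1] = [1..<n] @ [n]"
    using assms by simp
  have "map (T(n := T (Suc n))) [1..<n + 1] = map T [1..<n] @ [T (Suc n)]"
    unfolding split by simp
  moreover have "map T [1..<Suc n + 1] = map T [1..<n] @ [T n, T (Suc n)]"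
    using split by simp
  ultimately have right: "butlast (map T [1..<n + 1]) @ [last (map T [1..<Suc n + 1])]
      = map (T(n := T (Suc n))) [1..<n + 1]"
    using split by (simp add: butlast_append)
  show ?thesis
    unfolding multi_join_Node[OF len] left right ..
qed

lemma label_join_all:
  "1 \<le> m \<Longrightarrow> label (join_all T m) = (\<Union>i\<in>{1..m}. label (T i))"
proof (induction m arbitrary: T)
  case (Suc n)
  show ?case
  proof (cases "n = 0")
    case False
    then have "label (join_all T (Suc n))
        = (\<Union>i\<in>{1..n}. label (T i)) \<union> (\<Union>i\<in>{1..n}. label ((T(n := T (Suc n))) i))"
      by (simp only: join_all_Suc label.simps Suc.IH)
    also have "\<dots> = (\<Union>i\<in>{1..<n}. label (T i)) \<union> label (T n) \<union> label (T (Suc n))"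
    proof -
      have "{1..n} = insert n {1..<n}"
        using False by auto
      moreover have "(\<Union>i\<in>{1..<n}. label ((T(n := T (Suc n))) i)) = (\<Union>i\<in>{1..<n}. label (T i))"
        by (rule SUP_cong) auto
      ultimately show ?thesis
        by auto
    qed
    also have "\<dots> = (\<Union>i\<in>{1..Suc n}. label (T i))"
      using False by (auto simp: atLeastAtMostSuc_conv atLeastLessThan_eq_atLeastAtMost_diff)
    finally show ?thesis .
  qed simp
qed simp

lemma label_join_all_upd:
  assumes "1 \<le> n"
  shows "label (join_all (T(n := X)) n) = (\<Union>i\<in>{1..<n}. label (T i)) \<union> label X"
proof -
  have "{1..n} = insert n {1..<n}"
    using assms by auto
  moreover have "(\<Union>i\<in>{1..<n}. label ((T(n := X)) i)) = (\<Union>i\<in>{1..<n}. label (T i))"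
    by (rule SUP_cong) auto
  ultimately show ?thesis
    unfolding label_join_all[OF assms] by auto
qed

lemma Union_branch_covering_join_all:
  "C \<in> branch_coverings (join_all T m) \<Longrightarrow> 1 \<le> m \<Longrightarrow> \<Union>C = (\<Union>i\<in>{1..m}. label (T i))"
  by (metis Union_branch_covering label_join_all)

lemma branch_covering_NodeL: "C \<in> branch_coverings a \<Longrightarrow> insert (label b) C \<in> branch_coverings (Node a b)"
  by auto

lemma branch_covering_NodeR: "C \<in> branch_coverings b \<Longrightarrow> insert (label a) C \<in> branch_coverings (Node a b)"
  by auto

text \<open>Following the right child at every level leads from the root of \<open>{{T_1,...,T_m}}\<close> to \<open>T_m\<close>;
  the siblings met on the way are the unions \<open>T_1 \<union> ... \<union> T_i\<close>, whose new components
  relative to their predecessors are those of \<open>T_i\<close>.\<close>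
lemma branch_covering_join_all_last:
  assumes "1 \<le> m" and "\<forall>i\<in>{1..m}. {} \<notin> label (T i)" and "set B \<in> branch_coverings (T m)"
  shows "\<exists>S. set (S @ B) \<in> branch_coverings (join_all T m) \<and>
    \<Union>(set S) = (\<Union>i\<in>{1..<m}. label (T i)) \<and> dvec (map (\<lambda>i. label (T i)) [1..<m]) \<le> dvec S"
  using assms
proof (induction m arbitrary: T)
  case (Suc n)
  show ?case
  proof (cases "n = 0")
    case True
    with Suc.prems show ?thesis
      by (intro exI[of _ "[]"]) simp
  next
    case False
    then have n: "1 \<le> n" "{1..n} = insert n {1..<n}" "{1..<Suc n} = insert n {1..<n}"
      by auto
    define T' where "T' = T(n := T (Suc n))"
    define A where "A = (\<Union>i\<in>{1..<n}. label (T i))"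
    have "\<forall>i\<in>{1..n}. {} \<notin> label (T' i)" "set B \<in> branch_coverings (T' n)"
      using Suc.prems by (auto simp: T'_def)
    with n(1) obtain S where S: "set (S @ B) \<in> branch_coverings (join_all T' n)"
        "\<Union>(set S) = (\<Union>i\<in>{1..<n}. label (T' i))" "dvec (map (\<lambda>i. label (T' i)) [1..<n]) \<le> dvec S"
      using Suc.IH[of T'] by blast
    have US: "\<Union>(set S) = A"
      unfolding S(2) A_def T'_def by (rule SUP_cong) auto
    have "map (\<lambda>i. label (T' i)) [1..<n] = map (\<lambda>i. label (T i)) [1..<n]"
      unfolding T'_def by (rule map_cong) auto
    with S(3) have dS: "dvec (map (\<lambda>i. label (T i)) [1..<n]) \<le> dvec S"
      by argo
    have left: "label (join_all T n) = A \<union> label (T n)"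
      using label_join_all_upd[OF n(1), of T "T n"] by (simp add: A_def)
    have A_ne: "{} \<notin> A"
      using Suc.prems(2) by (auto simp: A_def)
    let ?S = "S @ [A \<union> label (T n)]"
    have "insert (label (join_all T n)) (set (S @ B)) \<in> branch_coverings (join_all T (Suc n))"
      unfolding join_all_Suc[OF n(1)] T'_def[symmetric] by (rule branch_covering_NodeR[OF S(1)])
    moreover have "set (?S @ B) = insert (label (join_all T n)) (set (S @ B))"
      using left by simp
    moreover have "\<Union>(set ?S) = (\<Union>i\<in>{1..<Suc n}. label (T i))"
      using US n(3) by (simp add: A_def) blast
    moreover have "dvec ?S = dvec S + n_comp (gminus (label (T n)) A)"
      using US A_ne unfolding dvec_def by (simp add: dvec_c_snoc_absorb)
    moreover have "dvec (map (\<lambda>i. label (T i)) [1..<Suc n])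
        = dvec (map (\<lambda>i. label (T i)) [1..<n]) + n_comp (gminus (label (T n)) A)"
      using n(1) by (simp add: dvec_def dvec_c_snoc A_def)
    ultimately show ?thesis
      using dS by (metis add_le_mono1)
  qed
qed simp

lemma branch_covering_join_all_penultimate:
  assumes "1 \<le> n" and "\<forall>i\<in>{1..Suc n}. {} \<notin> label (T i)" and "set B \<in> branch_coverings (T n)"
  shows "\<exists>S. set (S @ B) \<in> branch_coverings (join_all T (Suc n)) \<and>
    \<Union>(set S) = (\<Union>i\<in>{1..<n}. label (T i)) \<union> label (T (Suc n)) \<and>
    dvec (map (\<lambda>i. label (T i)) [1..<n] @ [label (T (Suc n))]) \<le> dvec S"
proof -
  define A where "A = (\<Union>i\<in>{1..<n}. label (T i))"
  obtain S where S: "set (S @ B) \<in> branch_coverings (join_all T n)"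
      "\<Union>(set S) = A" "dvec (map (\<lambda>i. label (T i)) [1..<n]) \<le> dvec S"
    using branch_covering_join_all_last[of n T B] assms unfolding A_def by auto
  have right: "label (join_all (T(n := T (Suc n))) n) = A \<union> label (T (Suc n))"
    unfolding label_join_all_upd[OF assms(1)] A_def ..
  have A_ne: "{} \<notin> A"
    using assms(2) by (auto simp: A_def)
  let ?S = "S @ [A \<union> label (T (Suc n))]"
  have "insert (label (join_all (T(n := T (Suc n))) n)) (set (S @ B))
      \<in> branch_coverings (join_all T (Suc n))"
    unfolding join_all_Suc[OF assms(1)] by (rule branch_covering_NodeL[OF S(1)])
  moreover have "set (?S @ B) = insert (label (join_all (T(n := T (Suc n))) n)) (set (S @ B))"
    using right by simp
  moreover have "\<Union>(set ?S) = A \<union> label (T (Suc n))"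
    using S(2) by auto
  moreover have "dvec ?S = dvec S + n_comp (gminus (label (T (Suc n))) A)"
    using S(2) A_ne unfolding dvec_def by (simp add: dvec_c_snoc_absorb)
  moreover have "dvec (map (\<lambda>i. label (T i)) [1..<n] @ [label (T (Suc n))])
      = dvec (map (\<lambda>i. label (T i)) [1..<n]) + n_comp (gminus (label (T (Suc n))) A)"
    by (simp add: dvec_def dvec_c_snoc A_def)
  ultimately show ?thesis
    using S(3) unfolding A_def by (metis add_le_mono1)
qed

section \<open>Shift maps\<close>

text \<open>The maps \<open>{1..m} \<rightarrow> {1..m}\<close> that arise from shift permutations by the reductions below;
  unlike \<^const>\<open>shift_perm\<close>, nothing is required outside \<open>{1..m}\<close>.\<close>
definition shift_inj :: "nat \<Rightarrow> (nat \<Rightarrow> nat) \<Rightarrow> bool" where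
  "shift_inj m \<tau> \<longleftrightarrow> inj_on \<tau> {1..m} \<and> (\<forall>i\<in>{1..m}. \<tau> i \<in> {1..m} \<and> i - 1 \<le> \<tau> i)"

lemma shift_perm_imp_shift_inj:
  assumes "shift_perm m \<sigma>"
  shows "shift_inj m \<sigma>"
proof -
  have "\<sigma> permutes {1..m}" "\<forall>j\<in>{1..m}. j - 1 \<le> \<sigma> j"
    using assms by (auto simp: shift_perm_def)
  moreover have "\<sigma> i \<in> {1..m}" if "i \<in> {1..m}" for i
    using that permutes_in_image[OF \<open>\<sigma> permutes {1..m}\<close>] by blast
  ultimately show ?thesis
    unfolding shift_inj_def by (simp add: permutes_inj_on)
qed

lemma shift_inj_image: "shift_inj m \<tau> \<Longrightarrow> \<tau> ` {1..m} = {1..m}"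
  unfolding shift_inj_def by (intro endo_inj_surj) auto

lemma shift_inj_UN: "shift_inj m \<tau> \<Longrightarrow> (\<Union>i\<in>{1..m}. f (\<tau> i)) = (\<Union>j\<in>{1..m}. f j)"
  using shift_inj_image by (metis image_image)

lemma shift_inj_last:
  assumes "shift_inj m \<tau>" and "1 \<le> m"
  shows "\<tau> m = m \<or> \<tau> m = m - 1"
  using assms unfolding shift_inj_def by force

lemma shift_inj_neq:
  "shift_inj m \<tau> \<Longrightarrow> i \<in> {1..m} \<Longrightarrow> j \<in> {1..m} \<Longrightarrow> i \<noteq> j \<Longrightarrow> \<tau> i \<noteq> \<tau> j"
  unfolding shift_inj_def inj_on_def by blast

lemma shift_inj_cong:
  assumes "\<And>j. j \<in> {1..m} \<Longrightarrow> \<tau> j = \<tau>' j"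
  shows "shift_inj m \<tau> \<longleftrightarrow> shift_inj m \<tau>'"
proof -
  have "inj_on \<tau> {1..m} \<longleftrightarrow> inj_on \<tau>' {1..m}"
    using assms by (rule inj_on_cong)
  then show ?thesis
    unfolding shift_inj_def using assms by auto
qed

lemma shift_inj_image_eq:
  assumes "shift_inj m \<sigma>" and "shift_inj m \<tau>" and "h \<in> {1..m}" and "\<forall>j\<in>{h..m}. \<tau> j = \<sigma> j"
  shows "\<tau> ` {1..<h} = \<sigma> ` {1..<h}"
proof -
  have split: "{1..<h} = {1..m} - {h..m}"
    using assms(3) by auto
  have "\<tau> ` {h..m} = \<sigma> ` {h..m}"
    by (intro image_cong) (simp_all add: assms(4))
  moreover have "f ` ({1..m} - {h..m}) = {1..m} - f ` {h..m}" if "shift_inj m f" for f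
  proof -
    have "f ` ({1..m} - {h..m}) = f ` {1..m} - f ` {h..m}"
      using that assms(3) unfolding shift_inj_def by (intro inj_on_image_set_diff) auto
    with shift_inj_image[OF that] show ?thesis
      by simp
  qed
  ultimately show ?thesis
    unfolding split using assms(1,2) by simp
qed

lemma shift_inj_label_eq:
  assumes "shift_inj m \<tau>" and "\<forall>i\<in>{1..m}. label (T i) = G i" and "i \<in> {1..m}"
  shows "label (T (\<tau> i)) = G (\<tau> i)"
  using assms unfolding shift_inj_def by blast

text \<open>The restriction of \<open>\<tau>\<close> to \<open>{1..n}\<close>, with the value \<open>Suc n\<close> (attained there only if
  \<open>\<tau> (Suc n) = n\<close>) replaced by \<open>n\<close>.\<close>
definition shift_peel :: "nat \<Rightarrow> (nat \<Rightarrow> nat) \<Rightarrow> nat \<Rightarrow> nat" where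
  "shift_peel n \<tau> i = (if \<tau> i = Suc n then n else \<tau> i)"

lemma shift_inj_peel:
  assumes "shift_inj (Suc n) \<tau>"
  shows "shift_inj n (shift_peel n \<tau>)"
proof -
  have "shift_peel n \<tau> i \<in> {1..n} \<and> i - 1 \<le> shift_peel n \<tau> i" if "i \<in> {1..n}" for i
  proof -
    have "\<tau> i \<in> {1..Suc n}" "i - 1 \<le> \<tau> i"
      using assms that unfolding shift_inj_def by auto
    with that show ?thesis
      unfolding shift_peel_def by auto
  qed
  moreover have "inj_on (shift_peel n \<tau>) {1..n}"
  proof (rule inj_onI)
    fix x y assume xy: "x \<in> {1..n}" "y \<in> {1..n}" "shift_peel n \<tau> x = shift_peel n \<tau> y"
    have last: "\<tau> (Suc n) = Suc n \<or> \<tau> (Suc n) = n"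
      using shift_inj_last[OF assms] by simp
    have "\<tau> x \<noteq> \<tau> (Suc n)" "\<tau> y \<noteq> \<tau> (Suc n)"
      using xy shift_inj_neq[OF assms] by auto
    with last xy(3) have "\<tau> x = \<tau> y"
      unfolding shift_peel_def by (auto split: if_splits)
    with xy(1,2) show "x = y"
      using shift_inj_neq[OF assms, of x y] by fastforce
  qed
  ultimately show ?thesis
    unfolding shift_inj_def by blast
qed

lemma shift_inj_UN_below_subset:
  assumes "shift_inj (Suc n) \<tau>"
  shows "(\<Union>i\<in>{1..<n}. f i) \<subseteq> (\<Union>i\<in>{1..n}. f (\<tau> i))"
proof (rule UN_least)
  fix j assume j: "j \<in> {1..<n}"
  then have "j \<in> \<tau> ` {1..Suc n}"
    using shift_inj_image[OF assms] by auto
  then obtain i where i: "i \<in> {1..Suc n}" "\<tau> i = j"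
    by blast
  have "n \<le> \<tau> (Suc n)"
    using shift_inj_last[OF assms] by auto
  with i j have "i \<in> {1..n}"
    by (auto simp: le_Suc_eq)
  then show "f j \<subseteq> (\<Union>i\<in>{1..n}. f (\<tau> i))"
    unfolding i(2)[symmetric] by (rule UN_upper)
qed

text \<open>The shape of \<^const>\<open>sigma_tilde\<close> on \<open>{1..h}\<close>: it is what makes the initial part of
  the enumeration reachable along a single branch.\<close>
definition fixes_prefix :: "(nat \<Rightarrow> nat) \<Rightarrow> nat \<Rightarrow> bool" where
  "fixes_prefix \<tau> h \<longleftrightarrow> (\<forall>i. 1 \<le> i \<and> i < h \<longrightarrow> \<tau> i = i) \<or>
     (2 \<le> h \<and> (\<forall>i. 1 \<le> i \<and> i < h - 1 \<longrightarrow> \<tau> i = i) \<and> \<tau> h = h - 1)"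

lemma fixes_prefix_peel:
  assumes "fixes_prefix \<tau> h" and "h \<le> n"
  shows "fixes_prefix (shift_peel n \<tau>) h"
proof -
  have peel: "shift_peel n \<tau> i = \<tau> i" if "\<tau> i < h" for i
    using that assms(2) by (simp add: shift_peel_def)
  from assms(1) consider (identity) "\<forall>i. 1 \<le> i \<and> i < h \<longrightarrow> \<tau> i = i"
    | (shifted) "2 \<le> h" "\<forall>i. 1 \<le> i \<and> i < h - 1 \<longrightarrow> \<tau> i = i" "\<tau> h = h - 1"
    unfolding fixes_prefix_def by blast
  then show ?thesis
  proof cases
    case identity
    then show ?thesis
      using peel unfolding fixes_prefix_def by auto
  next
    case shifted
    then show ?thesis
      using peel unfolding fixes_prefix_def by auto
  qed
qed

lemma fixes_prefix_top_fixed: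
  assumes "fixes_prefix \<tau> m" and "\<tau> m = m" and "i \<in> {1..<m}"
  shows "\<tau> i = i"
  using assms unfolding fixes_prefix_def by auto

lemma fixes_prefix_top_swapped:
  assumes "shift_inj (Suc n) \<tau>" and "1 \<le> n" and "fixes_prefix \<tau> (Suc n)" and "\<tau> (Suc n) = n"
  shows "\<forall>i\<in>{1..<n}. \<tau> i = i" and "\<tau> n = Suc n"
proof -
  have "\<tau> n \<noteq> \<tau> (Suc n)"
    using shift_inj_neq[OF assms(1), of n "Suc n"] assms(2) by auto
  then show below: "\<forall>i\<in>{1..<n}. \<tau> i = i"
    using assms(3,4) unfolding fixes_prefix_def by auto
  have "\<tau> n \<in> {1..Suc n}" "\<tau> n \<noteq> n"
    using assms(1,2,4) \<open>\<tau> n \<noteq> \<tau> (Suc n)\<close> unfolding shift_inj_def by auto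
  moreover have "\<tau> n \<notin> {1..<n}"
  proof
    assume "\<tau> n \<in> {1..<n}"
    with below have "\<tau> (\<tau> n) = \<tau> n"
      by blast
    with \<open>\<tau> n \<in> {1..<n}\<close> show False
      using shift_inj_neq[OF assms(1), of "\<tau> n" n] by auto
  qed
  ultimately show "\<tau> n = Suc n"
    by auto
qed

section \<open>Branches of iterated joins\<close>

lemma branch_covering_join_all_top:
  assumes "shift_inj m \<tau>" and "1 \<le> m" and "\<forall>i\<in>{1..m}. {} \<notin> label (T i)"
    and "set B \<in> branch_coverings (T (\<tau> m))"
  shows "\<exists>S. set (S @ B) \<in> branch_coverings (join_all T m) \<and>
    (fixes_prefix \<tau> m \<longrightarrow> \<Union>(set S) = (\<Union>i\<in>{1..<m}. label (T (\<tau> i))) \<and>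
       dvec (map (\<lambda>i. label (T (\<tau> i))) [1..<m]) \<le> dvec S)"
proof (cases "\<tau> m = m")
  case True
  obtain S where S: "set (S @ B) \<in> branch_coverings (join_all T m)"
      "\<Union>(set S) = (\<Union>i\<in>{1..<m}. label (T i))" "dvec (map (\<lambda>i. label (T i)) [1..<m]) \<le> dvec S"
    using branch_covering_join_all_last[of m T B] assms True by auto
  show ?thesis
  proof (intro exI[of _ S] conjI impI)
    assume "fixes_prefix \<tau> m"
    then have "(\<Union>i\<in>{1..<m}. label (T (\<tau> i))) = (\<Union>i\<in>{1..<m}. label (T i))"
      "map (\<lambda>i. label (T (\<tau> i))) [1..<m] = map (\<lambda>i. label (T i)) [1..<m]"
      using fixes_prefix_top_fixed[of \<tau> m, OF _ True] by (auto intro!: SUP_cong[OF refl] map_cong[OF refl])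
    with S(2,3) show "\<Union>(set S) = (\<Union>i\<in>{1..<m}. label (T (\<tau> i)))"
        "dvec (map (\<lambda>i. label (T (\<tau> i))) [1..<m]) \<le> dvec S"
      by (simp_all del: map_eq_conv)
  qed (rule S(1))
next
  case False
  with shift_inj_last[OF assms(1,2)] have \<tau>m: "\<tau> m = m - 1"
    by simp
  moreover have "\<tau> m \<ge> 1"
    using assms(1,2) unfolding shift_inj_def by auto
  ultimately obtain n where m: "m = Suc n" and n: "1 \<le> n"
    by (cases m) auto
  obtain S where S: "set (S @ B) \<in> branch_coverings (join_all T m)"
      "\<Union>(set S) = (\<Union>i\<in>{1..<n}. label (T i)) \<union> label (T (Suc n))"
      "dvec (map (\<lambda>i. label (T i)) [1..<n] @ [label (T (Suc n))]) \<le> dvec S"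
    using branch_covering_join_all_penultimate[of n T B] n assms(3,4) \<tau>m m by auto
  show ?thesis
  proof (intro exI[of _ S] conjI impI)
    assume "fixes_prefix \<tau> m"
    moreover have "\<tau> (Suc n) = n"
      using \<tau>m m by simp
    ultimately have swapped: "\<forall>i\<in>{1..<n}. \<tau> i = i" "\<tau> n = Suc n"
      using fixes_prefix_top_swapped[of n \<tau>] assms(1) n m by auto
    have "{1..<m} = insert n {1..<n}" "[1..<m] = [1..<n] @ [n]"
      using m n by auto
    moreover have "(\<Union>i\<in>{1..<n}. label (T (\<tau> i))) = (\<Union>i\<in>{1..<n}. label (T i))"
      "map (\<lambda>i. label (T (\<tau> i))) [1..<n] = map (\<lambda>i. label (T i)) [1..<n]"
      using swapped(1) by (auto intro!: SUP_cong[OF refl] map_cong[OF refl])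
    ultimately have "(\<Union>i\<in>{1..<m}. label (T (\<tau> i))) = (\<Union>i\<in>{1..<n}. label (T i)) \<union> label (T (Suc n))"
      "map (\<lambda>i. label (T (\<tau> i))) [1..<m] = map (\<lambda>i. label (T i)) [1..<n] @ [label (T (Suc n))]"
      using swapped(2) by (simp_all add: Un_commute)
    with S(2,3) show "\<Union>(set S) = (\<Union>i\<in>{1..<m}. label (T (\<tau> i)))"
        "dvec (map (\<lambda>i. label (T (\<tau> i))) [1..<m]) \<le> dvec S"
      by (simp_all del: map_eq_conv)
  qed (rule S(1))
qed

text \<open>The child of the root of \<open>{{T_1,...,T_{Suc n}}}\<close> containing \<open>T_{\<tau> 1},...,T_{\<tau> n}\<close> is
  \<^term>\<open>join_all (trees_peel n \<tau> T) n\<close>.\<close>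
definition trees_peel :: "nat \<Rightarrow> (nat \<Rightarrow> nat) \<Rightarrow> (nat \<Rightarrow> jtree) \<Rightarrow> nat \<Rightarrow> jtree" where
  "trees_peel n \<tau> T = (if \<tau> (Suc n) = Suc n then T else T(n := T (Suc n)))"

lemma trees_peel_shift_peel:
  assumes "shift_inj (Suc n) \<tau>" and "i \<in> {1..n}"
  shows "trees_peel n \<tau> T (shift_peel n \<tau> i) = T (\<tau> i)"
proof -
  have "\<tau> i \<noteq> \<tau> (Suc n)"
    using shift_inj_neq[OF assms(1), of i "Suc n"] assms(2) by auto
  then show ?thesis
    using shift_inj_last[OF assms(1)] unfolding trees_peel_def shift_peel_def by auto
qed

lemma branch_covering_join_all_peel:
  assumes "shift_inj (Suc n) \<tau>" and "1 \<le> n"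
    and "C \<in> branch_coverings (join_all (trees_peel n \<tau> T) n)"
  shows "insert ((\<Union>i\<in>{1..<n}. label (T i)) \<union> label (T (\<tau> (Suc n)))) C
    \<in> branch_coverings (join_all T (Suc n))"
proof (cases "\<tau> (Suc n) = Suc n")
  case True
  then show ?thesis
    using branch_covering_NodeL[of C "join_all T n" "join_all (T(n := T (Suc n))) n"] assms(3)
    unfolding join_all_Suc[OF assms(2)] label_join_all_upd[OF assms(2)] trees_peel_def by simp
next
  case False
  then have "\<tau> (Suc n) = n"
    using shift_inj_last[OF assms(1)] by simp
  moreover have "label (join_all T n) = (\<Union>i\<in>{1..<n}. label (T i)) \<union> label (T n)"
    using label_join_all_upd[OF assms(2), of T "T n"] by simp
  ultimately show ?thesis
    using branch_covering_NodeR[of C "join_all (T(n := T (Suc n))) n" "join_all T n"] assms(3) False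
    unfolding join_all_Suc[OF assms(2)] trees_peel_def by simp
qed

text \<open>One level of the descent below: the sibling left behind is \<open>T_{\<tau> (Suc n)}\<close> together with
  trees counted before, so it contributes exactly the components of \<open>T_{\<tau> (Suc n)}\<close>.\<close>
lemma branch_covering_join_all_sibling:
  assumes "shift_inj (Suc n) \<tau>" and "1 \<le> n" and "h \<le> n" and "\<forall>i\<in>{1..Suc n}. {} \<notin> label (T i)"
    and union: "(\<Union>i\<in>{1..h}. label (T (\<tau> i))) \<union> \<Union>(set S) = (\<Union>i\<in>{1..n}. label (T (\<tau> i)))"
    and dvec: "dvec_c (\<Union>i\<in>{1..h}. label (T (\<tau> i))) (map (\<lambda>i. label (T (\<tau> i))) [h+1..<n+1])
      \<le> dvec_c (\<Union>i\<in>{1..h}. label (T (\<tau> i))) S"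
  defines "S' \<equiv> S @ [(\<Union>i\<in>{1..<n}. label (T i)) \<union> label (T (\<tau> (Suc n)))]"
  shows "C \<union> set S \<in> branch_coverings (join_all (trees_peel n \<tau> T) n) \<Longrightarrow>
      C \<union> set S' \<in> branch_coverings (join_all T (Suc n))"
    and "(\<Union>i\<in>{1..h}. label (T (\<tau> i))) \<union> \<Union>(set S') = (\<Union>i\<in>{1..Suc n}. label (T (\<tau> i)))"
    and "dvec_c (\<Union>i\<in>{1..h}. label (T (\<tau> i))) (map (\<lambda>i. label (T (\<tau> i))) [h+1..<Suc n+1])
      \<le> dvec_c (\<Union>i\<in>{1..h}. label (T (\<tau> i))) S'"
proof -
  let ?L = "\<lambda>i. label (T (\<tau> i))"
  let ?U = "\<Union>i\<in>{1..h}. ?L i"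
  define A where "A = (\<Union>i\<in>{1..<n}. label (T i))"
  have "A \<subseteq> ?U \<union> \<Union>(set S)"
    unfolding union A_def by (rule shift_inj_UN_below_subset[OF assms(1)])
  moreover have "{} \<notin> A"
    using assms(4) by (auto simp: A_def)
  ultimately have A: "A \<subseteq> ?U \<union> \<Union>(set S)" "{} \<notin> A" .
  show "C \<union> set S' \<in> branch_coverings (join_all T (Suc n))"
    if "C \<union> set S \<in> branch_coverings (join_all (trees_peel n \<tau> T) n)"
    using branch_covering_join_all_peel[OF assms(1,2) that] by (simp add: S'_def)
  have "{1..Suc n} = insert (Suc n) {1..n}"
    by auto
  then show "?U \<union> \<Union>(set S') = (\<Union>i\<in>{1..Suc n}. ?L i)"
    using A(1) union unfolding S'_def A_def[symmetric] by auto
  have "dvec_c ?U S' = dvec_c ?U S + n_comp (gminus (?L (Suc n)) (\<Union>i\<in>{1..n}. ?L i))"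
    using dvec_c_snoc_absorb[OF A] union unfolding S'_def A_def by simp
  then show "dvec_c ?U (map ?L [h+1..<Suc n+1]) \<le> dvec_c ?U S'"
    using dvec dvec_c_map_Suc[OF assms(3), of ?L] by linarith
qed

text \<open>Descending from the root of \<open>{{T_1,...,T_m}}\<close> to the copy of a join of \<open>h\<close> of the
  trees that contains \<open>T_{\<tau> 1},...,T_{\<tau> h}\<close>: the siblings \<open>Spost\<close> met on the way add at least
  the components of the remaining trees \<open>T_{\<tau> (h+1)},...,T_{\<tau> m}\<close>.\<close>
lemma branch_covering_join_all_descend:
  assumes "shift_inj m \<tau>" and "1 \<le> h" and "h \<le> m" and "\<forall>i\<in>{1..m}. {} \<notin> label (T i)"
  shows "\<exists>T' \<tau>' Spost. shift_inj h \<tau>' \<and> (\<forall>i\<in>{1..h}. T' (\<tau>' i) = T (\<tau> i)) \<and>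
    (fixes_prefix \<tau> h \<longrightarrow> fixes_prefix \<tau>' h) \<and>
    (\<forall>C\<in>branch_coverings (join_all T' h). C \<union> set Spost \<in> branch_coverings (join_all T m)) \<and>
    (\<Union>i\<in>{1..h}. label (T (\<tau> i))) \<union> \<Union>(set Spost) = (\<Union>i\<in>{1..m}. label (T (\<tau> i))) \<and>
    dvec_c (\<Union>i\<in>{1..h}. label (T (\<tau> i))) (map (\<lambda>i. label (T (\<tau> i))) [h+1..<m+1])
      \<le> dvec_c (\<Union>i\<in>{1..h}. label (T (\<tau> i))) Spost"
  using assms
proof (induction m arbitrary: T \<tau>)
  case (Suc n)
  show ?case
  proof (cases "h = Suc n")
    case True
    with Suc.prems(1) show ?thesis
      by (intro exI[of _ T] exI[of _ \<tau>] exI[of _ "[]"]) simp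
  next
    case False
    with Suc.prems have hn: "h \<le> n" and n: "1 \<le> n"
      by auto
    define T1 where "T1 = trees_peel n \<tau> T"
    define \<tau>1 where "\<tau>1 = shift_peel n \<tau>"
    have rel: "T1 (\<tau>1 i) = T (\<tau> i)" if "i \<in> {1..n}" for i
      unfolding T1_def \<tau>1_def by (rule trees_peel_shift_peel[OF Suc.prems(1) that])
    have "shift_inj n \<tau>1"
      unfolding \<tau>1_def by (rule shift_inj_peel[OF Suc.prems(1)])
    moreover have "\<forall>i\<in>{1..n}. {} \<notin> label (T1 i)"
      using Suc.prems(4) by (auto simp: T1_def trees_peel_def)
    ultimately have "\<exists>T' \<tau>' Spost. shift_inj h \<tau>' \<and> (\<forall>i\<in>{1..h}. T' (\<tau>' i) = T1 (\<tau>1 i)) \<and>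
      (fixes_prefix \<tau>1 h \<longrightarrow> fixes_prefix \<tau>' h) \<and>
      (\<forall>C\<in>branch_coverings (join_all T' h). C \<union> set Spost \<in> branch_coverings (join_all T1 n)) \<and>
      (\<Union>i\<in>{1..h}. label (T1 (\<tau>1 i))) \<union> \<Union>(set Spost) = (\<Union>i\<in>{1..n}. label (T1 (\<tau>1 i))) \<and>
      dvec_c (\<Union>i\<in>{1..h}. label (T1 (\<tau>1 i))) (map (\<lambda>i. label (T1 (\<tau>1 i))) [h+1..<n+1])
        \<le> dvec_c (\<Union>i\<in>{1..h}. label (T1 (\<tau>1 i))) Spost"
      by (rule Suc.IH[OF _ Suc.prems(2) hn])
    then obtain T' \<tau>' Spost where IH: "shift_inj h \<tau>'" "\<forall>i\<in>{1..h}. T' (\<tau>' i) = T1 (\<tau>1 i)"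
        "fixes_prefix \<tau>1 h \<longrightarrow> fixes_prefix \<tau>' h"
        "\<forall>C\<in>branch_coverings (join_all T' h). C \<union> set Spost \<in> branch_coverings (join_all T1 n)"
        "(\<Union>i\<in>{1..h}. label (T1 (\<tau>1 i))) \<union> \<Union>(set Spost) = (\<Union>i\<in>{1..n}. label (T1 (\<tau>1 i)))"
        "dvec_c (\<Union>i\<in>{1..h}. label (T1 (\<tau>1 i))) (map (\<lambda>i. label (T1 (\<tau>1 i))) [h+1..<n+1])
          \<le> dvec_c (\<Union>i\<in>{1..h}. label (T1 (\<tau>1 i))) Spost"
      by (elim exE conjE) (rule that; assumption)
    have "(\<Union>i\<in>{1..h}. label (T1 (\<tau>1 i))) = (\<Union>i\<in>{1..h}. label (T (\<tau> i)))"
      "(\<Union>i\<in>{1..n}. label (T1 (\<tau>1 i))) = (\<Union>i\<in>{1..n}. label (T (\<tau> i)))"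
      "map (\<lambda>i. label (T1 (\<tau>1 i))) [h+1..<n+1] = map (\<lambda>i. label (T (\<tau> i))) [h+1..<n+1]"
      using rel hn by (auto intro!: SUP_cong[OF refl] map_cong[OF refl])
    note step = branch_covering_join_all_sibling[OF Suc.prems(1) n hn Suc.prems(4) IH(5,6)[unfolded this]]
    let ?S = "Spost @ [(\<Union>i\<in>{1..<n}. label (T i)) \<union> label (T (\<tau> (Suc n)))]"
    show ?thesis
    proof (intro exI[of _ T'] exI[of _ \<tau>'] exI[of _ ?S] conjI)
      show "\<forall>i\<in>{1..h}. T' (\<tau>' i) = T (\<tau> i)"
        using IH(2) rel hn by auto
      show "fixes_prefix \<tau> h \<longrightarrow> fixes_prefix \<tau>' h"
        using IH(3) fixes_prefix_peel[OF _ hn] unfolding \<tau>1_def by blast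
      show "\<forall>C\<in>branch_coverings (join_all T' h). C \<union> set ?S \<in> branch_coverings (join_all T (Suc n))"
        using IH(4) step(1) unfolding T1_def by blast
    qed (fact IH(1) step(2,3))+
  qed
qed simp

lemma branch_covering_join_all_through:
  assumes "shift_inj m \<tau>" and "h \<in> {1..m}" and "\<forall>i\<in>{1..m}. {} \<notin> label (T i)"
    and "set B \<in> branch_coverings (T (\<tau> h))"
  shows "\<exists>Spre Spost. set (Spre @ B @ Spost) \<in> branch_coverings (join_all T m) \<and>
    \<Union>(set Spre) \<union> label (T (\<tau> h)) = (\<Union>i\<in>{1..h}. label (T (\<tau> i))) \<and>
    dvec_c (\<Union>i\<in>{1..h}. label (T (\<tau> i))) (map (\<lambda>i. label (T (\<tau> i))) [h+1..<m+1])
      \<le> dvec_c (\<Union>i\<in>{1..h}. label (T (\<tau> i))) Spost \<and>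
    (fixes_prefix \<tau> h \<longrightarrow> \<Union>(set Spre) = (\<Union>i\<in>{1..<h}. label (T (\<tau> i))) \<and>
       dvec (map (\<lambda>i. label (T (\<tau> i))) [1..<h]) \<le> dvec Spre)"
proof -
  have h: "1 \<le> h" "h \<le> m"
    using assms(2) by auto
  obtain T' \<tau>' Spost where D: "shift_inj h \<tau>'" "\<forall>i\<in>{1..h}. T' (\<tau>' i) = T (\<tau> i)"
      "fixes_prefix \<tau> h \<longrightarrow> fixes_prefix \<tau>' h"
      "\<forall>C\<in>branch_coverings (join_all T' h). C \<union> set Spost \<in> branch_coverings (join_all T m)"
      "(\<Union>i\<in>{1..h}. label (T (\<tau> i))) \<union> \<Union>(set Spost) = (\<Union>i\<in>{1..m}. label (T (\<tau> i)))"
      "dvec_c (\<Union>i\<in>{1..h}. label (T (\<tau> i))) (map (\<lambda>i. label (T (\<tau> i))) [h+1..<m+1])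
        \<le> dvec_c (\<Union>i\<in>{1..h}. label (T (\<tau> i))) Spost"
    using branch_covering_join_all_descend[OF assms(1) h assms(3)] by (elim exE conjE) (rule that; assumption)
  have T'_ne: "\<forall>j\<in>{1..h}. {} \<notin> label (T' j)"
  proof
    fix j assume "j \<in> {1..h}"
    then obtain i where "i \<in> {1..h}" "j = \<tau>' i"
      using shift_inj_image[OF D(1)] by blast
    moreover have "\<tau> i \<in> {1..m}"
      using assms(1) \<open>i \<in> {1..h}\<close> h unfolding shift_inj_def by auto
    ultimately show "{} \<notin> label (T' j)"
      using D(2) assms(3) by auto
  qed
  have "set B \<in> branch_coverings (T' (\<tau>' h))"
    using D(2) assms(4) h by auto
  then obtain S where S: "set (S @ B) \<in> branch_coverings (join_all T' h)"
      "fixes_prefix \<tau>' h \<longrightarrow> \<Union>(set S) = (\<Union>i\<in>{1..<h}. label (T' (\<tau>' i))) \<and>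
         dvec (map (\<lambda>i. label (T' (\<tau>' i))) [1..<h]) \<le> dvec S"
    using branch_covering_join_all_top[OF D(1) h(1) T'_ne] by blast
  have "set (S @ B @ Spost) \<in> branch_coverings (join_all T m)"
    using D(4) S(1) by (metis append.assoc set_append)
  moreover have "\<Union>(set S) \<union> label (T (\<tau> h)) = (\<Union>i\<in>{1..h}. label (T (\<tau> i)))"
  proof -
    have "\<Union>(set S) \<union> label (T (\<tau> h)) = (\<Union>j\<in>{1..h}. label (T' j))"
      using Union_branch_covering_join_all[OF S(1) h(1)] Union_branch_covering[OF assms(4)] by simp
    also have "\<dots> = (\<Union>i\<in>{1..h}. label (T' (\<tau>' i)))"
      by (rule shift_inj_UN[OF D(1), symmetric])
    also have "\<dots> = (\<Union>i\<in>{1..h}. label (T (\<tau> i)))"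
      using D(2) by (intro SUP_cong[OF refl]) auto
    finally show ?thesis .
  qed
  moreover have "(\<Union>i\<in>{1..<h}. label (T' (\<tau>' i))) = (\<Union>i\<in>{1..<h}. label (T (\<tau> i)))"
    "map (\<lambda>i. label (T' (\<tau>' i))) [1..<h] = map (\<lambda>i. label (T (\<tau> i))) [1..<h]"
    using D(2) by (auto intro!: SUP_cong[OF refl] map_cong[OF refl])
  ultimately show ?thesis
    using D(3,6) S(2) by (intro exI[of _ S] exI[of _ Spost]) (simp del: map_eq_conv)
qed

lemma Psi_join_all_ge:
  assumes "shift_inj m \<tau>" and "h \<in> {1..m}"
    and labels: "\<forall>i\<in>{1..m}. label (T i) = G i" and "\<forall>i\<in>{1..m}. {} \<notin> G i"
  shows "Psi (T (\<tau> h)) + dvec_c (\<Union>i\<in>{1..h}. G (\<tau> i)) (map (\<lambda>i. G (\<tau> i)) [h+1..<m+1])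
    \<le> Psi (join_all T m)"
proof -
  let ?U = "\<Union>i\<in>{1..h}. G (\<tau> i)"
  have ne: "\<forall>i\<in>{1..m}. {} \<notin> label (T i)"
    using assms(3,4) by simp
  have "label (T (\<tau> i)) = G (\<tau> i)" if "i \<in> {1..m}" for i
    using shift_inj_label_eq[OF assms(1) labels that] .
  then have "(\<Union>i\<in>{1..h}. label (T (\<tau> i))) = ?U"
    "map (\<lambda>i. label (T (\<tau> i))) [h+1..<m+1] = map (\<lambda>i. G (\<tau> i)) [h+1..<m+1]"
    using assms(2) by (auto intro!: SUP_cong[OF refl] map_cong[OF refl])
  note G = this
  obtain B where B: "set B \<in> branch_coverings (T (\<tau> h))" "dvec B = Psi (T (\<tau> h))"
    using Psi_attained by blast
  obtain Spre Spost where W: "set (Spre @ B @ Spost) \<in> branch_coverings (join_all T m)"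
      "\<Union>(set Spre) \<union> label (T (\<tau> h)) = ?U"
      "dvec_c ?U (map (\<lambda>i. G (\<tau> i)) [h+1..<m+1]) \<le> dvec_c ?U Spost"
    using branch_covering_join_all_through[OF assms(1,2) ne B(1)] unfolding G by blast
  have "\<Union>(set B) = label (T (\<tau> h))"
    by (rule Union_branch_covering[OF B(1)])
  with W(2) have "\<Union>(set B) \<union> \<Union>(set Spre) = ?U"
    by (simp add: Un_commute)
  then have "dvec (B @ Spre @ Spost) = Psi (T (\<tau> h)) + dvec_c (\<Union>(set B)) Spre + dvec_c ?U Spost"
    using B(2) by (simp add: dvec_def dvec_c_append Un_assoc)
  moreover have "dvec (B @ Spre @ Spost) \<le> Psi (join_all T m)"
  proof (rule dvec_le_Psi)
    show "set (B @ Spre @ Spost) \<in> branch_coverings (join_all T m)"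
      using W(1) by (simp add: Un_left_commute)
    show "{} \<notin> label (join_all T m)"
      using assms(2) ne by (subst label_join_all) auto
  qed
  ultimately show ?thesis
    using W(3) by linarith
qed

lemma Psi_join_all_ge_tminus:
  assumes "shift_inj m \<tau>" and "h \<in> {1..m}" and "fixes_prefix \<tau> h"
    and labels: "\<forall>i\<in>{1..m}. label (T i) = G i" and "\<forall>i\<in>{1..m}. {} \<notin> G i"
    and "\<forall>i\<in>{1..m}. finite (G i)"
  defines "F \<equiv> \<Union>i\<in>{1..<h}. G (\<tau> i)"
  shows "Psi (tminus (T (\<tau> h)) F) + dvec (map (\<lambda>i. G (\<tau> i)) [1..<m+1])
    \<le> Psi (join_all T m) + n_comp (gminus (G (\<tau> h)) F)"
proof -
  let ?L = "\<lambda>i. G (\<tau> i)"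
  let ?U = "\<Union>i\<in>{1..h}. ?L i"
  have ne: "\<forall>i\<in>{1..m}. {} \<notin> label (T i)"
    using assms(4,5) by simp
  have G_\<tau>: "label (T (\<tau> i)) = G (\<tau> i)" if "i \<in> {1..m}" for i
    using shift_inj_label_eq[OF assms(1) labels that] .
  have "\<tau> h \<in> {1..m}"
    using assms(1,2) unfolding shift_inj_def by auto
  with assms(4,6) have "finite (label (T (\<tau> h)))"
    by simp
  then obtain B where B: "set B \<in> branch_coverings (T (\<tau> h))" "Psi (tminus (T (\<tau> h)) F) \<le> dvec_c F B"
    using Psi_tminus_le by blast
  have "(\<Union>i\<in>{1..h}. label (T (\<tau> i))) = ?U" "(\<Union>i\<in>{1..<h}. label (T (\<tau> i))) = F"
    "map (\<lambda>i. label (T (\<tau> i))) [h+1..<m+1] = map ?L [h+1..<m+1]"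
    "map (\<lambda>i. label (T (\<tau> i))) [1..<h] = map ?L [1..<h]"
    using G_\<tau> assms(2) unfolding F_def by (auto intro!: SUP_cong[OF refl] map_cong[OF refl])
  note G = this
  obtain Spre Spost where W: "set (Spre @ B @ Spost) \<in> branch_coverings (join_all T m)"
      "\<Union>(set Spre) \<union> label (T (\<tau> h)) = ?U" "dvec_c ?U (map ?L [h+1..<m+1]) \<le> dvec_c ?U Spost"
      "\<Union>(set Spre) = F" "dvec (map ?L [1..<h]) \<le> dvec Spre"
    using branch_covering_join_all_through[OF assms(1,2) ne B(1)] assms(3) unfolding G by blast
  have "dvec (Spre @ B @ Spost) = dvec Spre + dvec_c F B + dvec_c ?U Spost"
    using W(2,4) Union_branch_covering[OF B(1)] by (simp add: dvec_def dvec_c_append Un_assoc)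
  moreover have "dvec (Spre @ B @ Spost) \<le> Psi (join_all T m)"
  proof (rule dvec_le_Psi[OF W(1)])
    show "{} \<notin> label (join_all T m)"
      using assms(2) ne by (subst label_join_all) auto
  qed
  moreover have "dvec (map ?L [1..<m+1])
      = dvec (map ?L [1..<h]) + n_comp (gminus (?L h) F) + dvec_c ?U (map ?L [h+1..<m+1])"
  proof -
    have "[1..<m+1] = [1..<h] @ [h..<m+1]"
      using upt_add_eq_append[of 1 h "m + 1 - h"] assms(2) by simp
    also have "[h..<m+1] = [h] @ [h+1..<m+1]"
      using assms(2) upt_conv_Cons by simp
    finally have "[1..<m+1] = [1..<h] @ [h] @ [h+1..<m+1]" .
    moreover have "\<Union>(set (map ?L [1..<h])) = F"
      unfolding F_def by simp
    moreover have "F \<union> ?L h = ?U"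
      using W(2,4) G_\<tau> assms(2) by simp
    ultimately show ?thesis
      by (simp add: dvec_def dvec_c_append)
  qed
  ultimately show ?thesis
    using B(2) W(3,5) by linarith
qed

section \<open>Index sets of shift permutations\<close>

definition next_in :: "nat set \<Rightarrow> nat \<Rightarrow> nat" where
  "next_in I j = Min {i \<in> I. j \<le> i}"

text \<open>\<^const>\<open>sigma_I\<close> without list indexing: with \<open>I = {i_1 < ... < i_p}\<close>, the block start
  \<open>i_{h-1} + 1\<close> is sent to the block end \<open>i_h\<close>, every other \<open>j\<close> to \<open>j - 1\<close>.\<close>
definition shift_fun :: "nat set \<Rightarrow> nat \<Rightarrow> nat" where
  "shift_fun I j = (if j - 1 \<in> insert 0 I then next_in I j else j - 1)"

definition valid_index_set :: "nat \<Rightarrow> nat set \<Rightarrow> bool" where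
  "valid_index_set m I \<longleftrightarrow> I \<subseteq> {1..m} \<and> m \<in> I"

lemma valid_index_set_finite: "valid_index_set m I \<Longrightarrow> finite I"
  unfolding valid_index_set_def using finite_subset by blast

lemma next_in_eqI:
  "finite I \<Longrightarrow> i \<in> I \<Longrightarrow> j \<le> i \<Longrightarrow> (\<And>x. x \<in> I \<Longrightarrow> j \<le> x \<Longrightarrow> i \<le> x) \<Longrightarrow> next_in I j = i"
  unfolding next_in_def by (intro Min_eqI) auto

lemma next_in_self: "finite I \<Longrightarrow> i \<in> I \<Longrightarrow> next_in I i = i"
  by (rule next_in_eqI) auto

lemma next_in_cong: "{i \<in> I. j \<le> i} = {i \<in> J. j \<le> i} \<Longrightarrow> next_in I j = next_in J j"
  unfolding next_in_def by simp

lemma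
  assumes "valid_index_set m I" and "j \<le> m"
  shows next_in_mem: "next_in I j \<in> I"
    and next_in_ge: "j \<le> next_in I j"
    and next_in_le: "x \<in> I \<Longrightarrow> j \<le> x \<Longrightarrow> next_in I j \<le> x"
proof -
  have fin: "finite {i \<in> I. j \<le> i}" and ne: "{i \<in> I. j \<le> i} \<noteq> {}"
    using assms valid_index_set_finite unfolding valid_index_set_def by auto
  show "next_in I j \<in> I" "j \<le> next_in I j"
    using Min_in[OF fin ne] unfolding next_in_def by auto
  show "x \<in> I \<Longrightarrow> j \<le> x \<Longrightarrow> next_in I j \<le> x"
    using Min_le[OF fin] unfolding next_in_def by auto
qed

lemma shift_fun_cases:
  assumes "valid_index_set m I" and "j \<in> {1..m}"
  shows "j - 1 \<in> insert 0 I \<Longrightarrow> shift_fun I j \<in> I \<and> j \<le> shift_fun I j"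
    and "j - 1 \<notin> insert 0 I \<Longrightarrow> shift_fun I j = j - 1 \<and> shift_fun I j \<notin> I"
  using assms next_in_mem[OF assms(1)] next_in_ge[OF assms(1)] by (auto simp: shift_fun_def)

lemma shift_inj_shift_fun:
  assumes "valid_index_set m I"
  shows "shift_inj m (shift_fun I)"
proof -
  note start = shift_fun_cases(1)[OF assms] and inner = shift_fun_cases(2)[OF assms]
  have range: "shift_fun I j \<in> {1..m} \<and> j - 1 \<le> shift_fun I j" if "j \<in> {1..m}" for j
  proof (cases "j - 1 \<in> insert 0 I")
    case True
    then show ?thesis
      using start[OF that] assms that unfolding valid_index_set_def by auto
  next
    case False
    then show ?thesis
      using inner[OF that] that by auto
  qed
  have less: "shift_fun I a < b"
    if "a \<in> {1..m}" "b \<in> {1..m}" "a < b" "b - 1 \<in> insert 0 I" for a b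
  proof (cases "a - 1 \<in> insert 0 I")
    case True
    have "b - 1 \<in> I" "a \<le> b - 1"
      using that by auto
    then have "shift_fun I a \<le> b - 1"
      using True next_in_le[OF assms] that(1) by (simp add: shift_fun_def)
    with that(3) show ?thesis
      by linarith
  qed (use inner[OF that(1)] that(3) in auto)
  have "shift_fun I a \<noteq> shift_fun I b" if "a \<in> {1..m}" "b \<in> {1..m}" "a < b" for a b
  proof (cases "b - 1 \<in> insert 0 I")
    case True
    with less[OF that] start[OF that(2)] show ?thesis
      by auto
  next
    case False
    with start[OF that(1)] inner[OF that(1)] inner[OF that(2)] that(3) show ?thesis
      by (cases "a - 1 \<in> insert 0 I") auto
  qed
  then have "inj_on (shift_fun I) {1..m}"
    by (intro linorder_inj_onI') auto
  with range show ?thesis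
    unfolding shift_inj_def by blast
qed

lemma sorted_index_list:
  assumes "valid_index_set m I"
  defines "xs \<equiv> 0 # sorted_list_of_set I"
  shows "sorted_wrt (<) xs" and "distinct xs" and "set xs = insert 0 I"
    and "\<And>i j. i < length xs \<Longrightarrow> j < length xs \<Longrightarrow> xs ! i < xs ! j \<Longrightarrow> i < j"
proof -
  have fin: "finite I"
    using valid_index_set_finite[OF assms(1)] .
  have "\<forall>x\<in>I. 0 < x"
    using assms(1) unfolding valid_index_set_def by auto
  then show sorted: "sorted_wrt (<) xs"
    unfolding xs_def using strict_sorted_list_of_set[of I] fin by simp
  then show "distinct xs"
    by (simp add: strict_sorted_iff)
  show "set xs = insert 0 I"
    unfolding xs_def using fin by simp
  fix i j assume ij: "i < length xs" "j < length xs" "xs ! i < xs ! j"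
  show "i < j"
  proof (rule ccontr)
    assume "\<not> i < j"
    moreover have "sorted xs"
      using sorted by (simp add: strict_sorted_iff)
    ultimately have "xs ! j \<le> xs ! i"
      using sorted_nth_mono[of xs j i] ij(1) by simp
    with ij(3) show False
      by simp
  qed
qed

lemma index_list_consecutive:
  assumes "valid_index_set m I" and "p \<in> insert 0 I" and "p < m"
  defines "xs \<equiv> 0 # sorted_list_of_set I"
  shows "\<exists>k. Suc k < length xs \<and> xs ! k = p \<and> xs ! Suc k = next_in I (Suc p)"
proof -
  note L = sorted_index_list[OF assms(1), folded xs_def]
  have "p \<in> set xs" "m \<in> set xs"
    using assms(1,2) L(3) unfolding valid_index_set_def by auto
  then obtain k l where k: "k < length xs" "xs ! k = p" and l: "l < length xs" "xs ! l = m"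
    by (auto simp: in_set_conv_nth)
  have "k < l"
    using L(4)[OF k(1) l(1)] k l assms(3) by simp
  then have k1: "Suc k < length xs"
    using l(1) by simp
  have "k < length (sorted_list_of_set I)"
    using k1 by (simp add: xs_def)
  then have "sorted_list_of_set I ! k \<in> set (sorted_list_of_set I)"
    by (rule nth_mem)
  then have mem: "xs ! Suc k \<in> I"
    using valid_index_set_finite[OF assms(1)] by (simp add: xs_def)
  have gt: "p < xs ! Suc k"
    using sorted_wrt_nth_less[OF L(1) _ k1, of k] k(2) by simp
  have "xs ! Suc k \<le> x" if "x \<in> I" "Suc p \<le> x" for x
  proof -
    have "x \<in> set xs"
      using that(1) L(3) by auto
    then obtain q where q: "q < length xs" "xs ! q = x"
      by (auto simp: in_set_conv_nth)
    have "k < q"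
      using L(4)[OF k(1) q(1)] k(2) q(2) that(2) by simp
    then consider "Suc k = q" | "Suc k < q"
      by linarith
    then show ?thesis
    proof cases
      case 2
      then show ?thesis
        using sorted_wrt_nth_less[OF L(1) _ q(1), of "Suc k"] q(2) by simp
    qed (use q in simp)
  qed
  with mem gt have "xs ! Suc k = next_in I (Suc p)"
    by (intro next_in_eqI[symmetric] valid_index_set_finite[OF assms(1)]) auto
  with k k1 show ?thesis
    by blast
qed

lemma sigma_I_eq_shift_fun:
  assumes "valid_index_set m I" and "j \<in> {1..m}"
  shows "sigma_I I j = shift_fun I j"
proof -
  define xs where "xs = 0 # sorted_list_of_set I"
  note L = sorted_index_list[OF assms(1), folded xs_def]
  define P where "P h \<longleftrightarrow> 1 \<le> h \<and> h < length xs \<and> j = xs ! (h - 1) + 1" for h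
  have sigma: "sigma_I I j = (if \<exists>h. P h then xs ! (THE h. P h) else j - 1)"
    unfolding sigma_I_def xs_def[symmetric] P_def Let_def ..
  show ?thesis
  proof (cases "j - 1 \<in> insert 0 I")
    case True
    have "j - 1 < m" "Suc (j - 1) = j"
      using assms(2) by auto
    with index_list_consecutive[OF assms(1) True, folded xs_def]
    obtain k where k: "Suc k < length xs" "xs ! k = j - 1" "xs ! Suc k = next_in I j"
      by auto
    have "P (Suc k)"
      using k assms(2) unfolding P_def by auto
    moreover have "h = Suc k" if "P h" for h
    proof -
      have "xs ! (h - 1) = xs ! k" "h - 1 < length xs"
        using that k assms(2) unfolding P_def by auto
      then have "h - 1 = k"
        using nth_eq_iff_index_eq[OF L(2)] k(1) by auto
      with that show ?thesis
        unfolding P_def by auto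
    qed
    ultimately have "(THE h. P h) = Suc k"
      by blast
    with \<open>P (Suc k)\<close> k(3) True show ?thesis
      unfolding sigma shift_fun_def by auto
  next
    case False
    have "\<not> P h" for h
    proof
      assume "P h"
      then have "j - 1 \<in> set xs"
        unfolding P_def by auto
      with False L(3) show False
        by simp
    qed
    with False show ?thesis
      unfolding sigma shift_fun_def by auto
  qed
qed

lemma tilde_I_next_in:
  assumes "valid_index_set m I" and "p \<in> insert 0 I" and "p < m"
  shows "tilde_I I (next_in I (Suc p)) = I \<union> {1..p}"
proof -
  define xs where "xs = 0 # sorted_list_of_set I"
  define j where "j = next_in I (Suc p)"
  note L = sorted_index_list[OF assms(1), folded xs_def]
  obtain k where k: "Suc k < length xs" "xs ! k = p" "xs ! Suc k = j"
    using index_list_consecutive[OF assms] unfolding xs_def j_def by auto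
  have "(THE h. 1 \<le> h \<and> h < length xs \<and> xs ! h = j) = Suc k"
  proof (rule the_equality)
    fix h assume "1 \<le> h \<and> h < length xs \<and> xs ! h = j"
    then show "h = Suc k"
      using nth_eq_iff_index_eq[OF L(2)] k by metis
  qed (use k in auto)
  moreover have "j \<in> I"
    using next_in_mem[OF assms(1)] assms(3) unfolding j_def by simp
  ultimately show ?thesis
    using k(2) unfolding tilde_I_def Let_def xs_def[symmetric] j_def[symmetric] by simp
qed

lemma tilde_I_not_mem: "j \<notin> I \<Longrightarrow> tilde_I I j = I \<union> {1..j - 1}"
  unfolding tilde_I_def Let_def by simp

lemma tilde_I_shift_fun:
  assumes "valid_index_set m I" and "h \<in> {1..m}"
  shows "tilde_I I (shift_fun I h) = I \<union> {1..(if h - 1 \<in> insert 0 I then h - 1 else h - 2)}"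
proof (cases "h - 1 \<in> insert 0 I")
  case True
  moreover have "h - 1 < m" "Suc (h - 1) = h"
    using assms(2) by auto
  ultimately show ?thesis
    using tilde_I_next_in[OF assms(1) True] by (simp add: shift_fun_def)
next
  case False
  then have "shift_fun I h = h - 1" "h - 1 \<notin> I" "h - 1 - 1 = h - 2"
    by (auto simp: shift_fun_def)
  with False show ?thesis
    by (simp add: tilde_I_not_mem)
qed

lemma valid_index_set_shift_fun_image:
  assumes "valid_index_set m I"
  shows "I = {shift_fun I j | j. j \<in> {1..m} \<and> j \<le> shift_fun I j}"
proof (intro set_eqI iffI)
  fix i assume i: "i \<in> I"
  define p where "p = Max (insert 0 {x \<in> I. x < i})"
  have fin: "finite (insert 0 {x \<in> I. x < i})"
    using valid_index_set_finite[OF assms] by auto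
  have "p \<in> insert 0 {x \<in> I. x < i}"
    unfolding p_def using Max_in[OF fin] by blast
  moreover have "i \<in> {1..m}"
    using i assms unfolding valid_index_set_def by auto
  ultimately have p: "p \<in> insert 0 I" "p < i" "Suc p \<in> {1..m}"
    by auto
  have "x \<le> p" if "x \<in> I" "x < i" for x
    unfolding p_def using Max_ge[OF fin] that by auto
  then have "next_in I (Suc p) = i"
    using p(2) i valid_index_set_finite[OF assms] by (intro next_in_eqI) force+
  with p show "i \<in> {shift_fun I j | j. j \<in> {1..m} \<and> j \<le> shift_fun I j}"
    by (intro CollectI exI[of _ "Suc p"]) (simp add: shift_fun_def)
next
  fix i assume "i \<in> {shift_fun I j | j. j \<in> {1..m} \<and> j \<le> shift_fun I j}"
  then obtain j where j: "j \<in> {1..m}" "j \<le> shift_fun I j" "i = shift_fun I j"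
    by blast
  then have "j - 1 \<in> insert 0 I"
    using shift_fun_cases(2)[OF assms j(1)] by force
  then show "i \<in> I"
    using shift_fun_cases(1)[OF assms j(1)] j(3) by simp
qed

lemma shift_fun_insert_top:
  assumes "valid_index_set n I" and "j \<in> {1..n}"
  shows "shift_fun (insert (Suc n) I) j = shift_fun I j"
proof -
  have "next_in (insert (Suc n) I) j = next_in I j"
  proof (rule next_in_eqI)
    show "finite (insert (Suc n) I)"
      using valid_index_set_finite[OF assms(1)] by simp
    have "next_in I j \<le> n"
      using next_in_mem[OF assms(1), of j] assms unfolding valid_index_set_def by auto
    then show "\<And>x. x \<in> insert (Suc n) I \<Longrightarrow> j \<le> x \<Longrightarrow> next_in I j \<le> x"
      using next_in_le[OF assms(1)] assms(2) by auto
  qed (use next_in_mem[OF assms(1)] next_in_ge[OF assms(1)] assms(2) in auto)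
  moreover have "j - 1 \<in> insert 0 (insert (Suc n) I) \<longleftrightarrow> j - 1 \<in> insert 0 I"
    using assms(2) by auto
  ultimately show ?thesis
    unfolding shift_fun_def by simp
qed

lemma shift_fun_move_top:
  assumes "valid_index_set n I" and "j \<in> {1..n}"
  shows "shift_fun (insert (Suc n) (I - {n})) j = (if shift_fun I j = n then Suc n else shift_fun I j)"
proof -
  let ?J = "insert (Suc n) (I - {n})"
  have fin: "finite ?J"
    using valid_index_set_finite[OF assms(1)] by simp
  have below: "x \<le> n" if "x \<in> I" for x
    using that assms(1) unfolding valid_index_set_def by auto
  have start: "j - 1 \<in> insert 0 ?J \<longleftrightarrow> j - 1 \<in> insert 0 I"
    using assms(2) by auto
  show ?thesis
  proof (cases "j - 1 \<in> insert 0 I")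
    case True
    note q = next_in_mem[OF assms(1)] next_in_ge[OF assms(1)] next_in_le[OF assms(1)]
    have "next_in ?J j = (if next_in I j = n then Suc n else next_in I j)"
    proof (cases "next_in I j = n")
      case True
      have "next_in ?J j = Suc n"
      proof (rule next_in_eqI[OF fin])
        show "Suc n \<le> x" if "x \<in> ?J" "j \<le> x" for x
          using that q(3)[of j x] True assms(2) by force
      qed (use assms(2) in auto)
      with True show ?thesis
        by simp
    next
      case False
      have "next_in ?J j = next_in I j"
      proof (rule next_in_eqI[OF fin])
        show "next_in I j \<le> x" if "x \<in> ?J" "j \<le> x" for x
          using that q(3)[of j x] below[OF q(1)] assms(2) by force
      qed (use False q(1,2) assms(2) in auto)
      with False show ?thesis
        by simp
    qed
    with True start show ?thesis
      unfolding shift_fun_def by simp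
  next
    case False
    with start assms(2) show ?thesis
      unfolding shift_fun_def by auto
  qed
qed

lemma shift_fun_peel_extend:
  assumes \<sigma>: "shift_inj (Suc n) \<sigma>" and "1 \<le> n" and I: "valid_index_set n I"
    and peel: "\<forall>j\<in>{1..n}. shift_peel n \<sigma> j = shift_fun I j"
  shows "\<exists>I'. valid_index_set (Suc n) I' \<and> (\<forall>j\<in>{1..Suc n}. \<sigma> j = shift_fun I' j)"
proof -
  have n_in: "n \<in> I"
    using I unfolding valid_index_set_def by simp
  have neq: "\<sigma> j \<noteq> \<sigma> (Suc n)" if "j \<in> {1..n}" for j
    using shift_inj_neq[OF \<sigma>, of j "Suc n"] that by auto
  show ?thesis
  proof (cases "\<sigma> (Suc n) = Suc n")
    case True
    have "\<sigma> j = shift_fun (insert (Suc n) I) j" if "j \<in> {1..Suc n}" for j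
    proof (cases "j = Suc n")
      case False
      with that have "j \<in> {1..n}"
        by auto
      then show ?thesis
        using peel neq True shift_fun_insert_top[OF I] by (simp add: shift_peel_def)
    qed (use True n_in valid_index_set_finite[OF I] in \<open>simp add: shift_fun_def next_in_self\<close>)
    moreover have "valid_index_set (Suc n) (insert (Suc n) I)"
      using I unfolding valid_index_set_def by auto
    ultimately show ?thesis
      by blast
  next
    case False
    then have top: "\<sigma> (Suc n) = n"
      using shift_inj_last[OF \<sigma>] by simp
    have "\<sigma> j = shift_fun (insert (Suc n) (I - {n})) j" if "j \<in> {1..Suc n}" for j
    proof (cases "j = Suc n")
      case False
      with that have "j \<in> {1..n}"
        by auto
      then have "shift_peel n \<sigma> j = shift_fun I j" "\<sigma> j \<noteq> n"
        using peel neq top by auto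
      then show ?thesis
        unfolding shift_fun_move_top[OF I \<open>j \<in> {1..n}\<close>] shift_peel_def by (auto split: if_splits)
    next
      case True
      have "n \<notin> insert 0 (insert (Suc n) (I - {n}))"
        using \<open>1 \<le> n\<close> by simp
      with True top show ?thesis
        by (simp add: shift_fun_def)
    qed
    moreover have "valid_index_set (Suc n) (insert (Suc n) (I - {n}))"
      using I unfolding valid_index_set_def by auto
    ultimately show ?thesis
      by blast
  qed
qed

lemma shift_inj_eq_shift_fun:
  assumes "shift_inj m \<sigma>" and "1 \<le> m"
  shows "\<exists>I. valid_index_set m I \<and> (\<forall>j\<in>{1..m}. \<sigma> j = shift_fun I j)"
  using assms
proof (induction m arbitrary: \<sigma>)
  case (Suc n)
  show ?case
  proof (cases "n = 0")
    case True
    then have "\<sigma> 1 = 1"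
      using Suc.prems(1) unfolding shift_inj_def by auto
    moreover have "shift_fun {1} 1 = 1"
      by (simp add: shift_fun_def next_in_self)
    ultimately show ?thesis
      using True by (intro exI[of _ "{1}"]) (simp add: valid_index_set_def)
  next
    case False
    then obtain I where "valid_index_set n I" "\<forall>j\<in>{1..n}. shift_peel n \<sigma> j = shift_fun I j"
      using Suc.IH[OF shift_inj_peel[OF Suc.prems(1)]] by auto
    with False show ?thesis
      using shift_fun_peel_extend[OF Suc.prems(1)] by simp
  qed
qed simp

lemma index_set_shift_perm:
  assumes "shift_perm m \<sigma>" and "1 \<le> m"
  shows "valid_index_set m (index_set m \<sigma>)" and "\<forall>j\<in>{1..m}. \<sigma> j = shift_fun (index_set m \<sigma>) j"
proof -
  obtain I where I: "valid_index_set m I" "\<forall>j\<in>{1..m}. \<sigma> j = shift_fun I j"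
    using shift_inj_eq_shift_fun[OF shift_perm_imp_shift_inj[OF assms(1)] assms(2)] by blast
  have "index_set m \<sigma> = I"
    unfolding index_set_def
  proof (rule the_equality)
    show "I \<subseteq> {1..m} \<and> m \<in> I \<and> (\<forall>j\<in>{1..m}. \<sigma> j = sigma_I I j)"
      using I sigma_I_eq_shift_fun[OF I(1)] unfolding valid_index_set_def by auto
  next
    fix I' assume I': "I' \<subseteq> {1..m} \<and> m \<in> I' \<and> (\<forall>j\<in>{1..m}. \<sigma> j = sigma_I I' j)"
    then have valid: "valid_index_set m I'"
      unfolding valid_index_set_def by blast
    with I' I(2) have "\<forall>j\<in>{1..m}. shift_fun I' j = shift_fun I j"
      using sigma_I_eq_shift_fun[OF valid] by simp
    then have "{shift_fun I' j | j. j \<in> {1..m} \<and> j \<le> shift_fun I' j}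
        = {shift_fun I j | j. j \<in> {1..m} \<and> j \<le> shift_fun I j}"
      by force
    then show "I' = I"
      using valid_index_set_shift_fun_image[OF valid] valid_index_set_shift_fun_image[OF I(1)] by simp
  qed
  with I show "valid_index_set m (index_set m \<sigma>)" "\<forall>j\<in>{1..m}. \<sigma> j = shift_fun (index_set m \<sigma>) j"
    by simp_all
qed

lemma
  assumes "valid_index_set m I" and "p < m"
  shows shift_fun_Un_atLeastAtMost_below: "j \<in> {1..p} \<Longrightarrow> shift_fun (I \<union> {1..p}) j = j"
    and shift_fun_Un_atLeastAtMost_above:
      "p < j \<Longrightarrow> p \<in> insert 0 I \<or> Suc p < j \<Longrightarrow> shift_fun (I \<union> {1..p}) j = shift_fun I j"
proof -
  have fin: "finite (I \<union> {1..p})"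
    using valid_index_set_finite[OF assms(1)] by simp
  show "shift_fun (I \<union> {1..p}) j = j" if "j \<in> {1..p}"
    using that next_in_self[OF fin, of j] by (auto simp: shift_fun_def)
  assume j: "p < j" "p \<in> insert 0 I \<or> Suc p < j"
  have "next_in (I \<union> {1..p}) j = next_in I j"
    using j(1) by (intro next_in_cong) auto
  moreover have "j - 1 \<in> insert 0 I" if "j - 1 \<in> {1..p}"
  proof (cases "Suc p < j")
    case False
    with j(1) have "j - 1 = p"
      by simp
    with j(2) False show ?thesis
      by simp
  qed (use that in auto)
  then have "j - 1 \<in> insert 0 (I \<union> {1..p}) \<longleftrightarrow> j - 1 \<in> insert 0 I"
    by auto
  ultimately show "shift_fun (I \<union> {1..p}) j = shift_fun I j"
    unfolding shift_fun_def by simp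
qed

text \<open>With \<open>I\<close> the index set of \<open>\<sigma>\<close>, \<open>\<tilde>\<sigma>_{\<sigma> h}\<close> is \<open>\<sigma>_{I \<union> {1..p}}\<close> where \<open>p = h - 1\<close> if \<open>h\<close>
  starts a block of \<open>\<sigma>\<close> and \<open>p = h - 2\<close> otherwise; it fixes \<open>1..p\<close> and agrees with \<open>\<sigma>\<close> from
  \<open>h\<close> on.\<close>
lemma sigma_tilde_shift_perm:
  assumes "shift_perm m \<sigma>" and "h \<in> {1..m}"
  defines "\<tau> \<equiv> sigma_tilde m \<sigma> (\<sigma> h)"
  shows "shift_inj m \<tau>" and "fixes_prefix \<tau> h" and "\<tau> h = \<sigma> h" and "\<tau> ` {1..<h} = \<sigma> ` {1..<h}"
proof -
  define I where "I = index_set m \<sigma>"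
  have I: "valid_index_set m I" "\<forall>j\<in>{1..m}. \<sigma> j = shift_fun I j"
    using index_set_shift_perm[OF assms(1)] assms(2) unfolding I_def by auto
  define p where "p = (if h - 1 \<in> insert 0 I then h - 1 else h - 2)"
  have p: "p < m" "p < h"
    using assms(2) by (auto simp: p_def)
  have "tilde_I I (\<sigma> h) = I \<union> {1..p}"
    using tilde_I_shift_fun[OF I(1) assms(2)] I(2) assms(2) unfolding p_def by simp
  moreover have J: "valid_index_set m (I \<union> {1..p})"
    using I(1) p(1) unfolding valid_index_set_def by auto
  ultimately have \<tau>: "\<tau> j = shift_fun (I \<union> {1..p}) j" if "j \<in> {1..m}" for j
    using sigma_I_eq_shift_fun[OF J that]
    unfolding \<tau>_def sigma_tilde_def I_def[symmetric] by simp
  show inj: "shift_inj m \<tau>"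
    using shift_inj_shift_fun[OF J] shift_inj_cong[of m \<tau>] \<tau> by blast
  have below: "\<tau> i = i" if "i \<in> {1..p}" for i
    using \<tau>[of i] shift_fun_Un_atLeastAtMost_below[OF I(1) p(1) that] that p by simp
  have above: "\<tau> j = \<sigma> j" if "j \<in> {h..m}" for j
  proof -
    have "p \<in> insert 0 I \<or> Suc p < j"
      using that by (auto simp: p_def)
    with that p show ?thesis
      using \<tau>[of j] I(2) shift_fun_Un_atLeastAtMost_above[OF I(1) p(1)] by simp
  qed
  then show "\<tau> h = \<sigma> h"
    using assms(2) by simp
  show "\<tau> ` {1..<h} = \<sigma> ` {1..<h}"
    using shift_inj_image_eq[OF shift_perm_imp_shift_inj[OF assms(1)] inj assms(2)] above by blast
  show "fixes_prefix \<tau> h"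
  proof (cases "h - 1 \<in> insert 0 I")
    case True
    then show ?thesis
      using below unfolding fixes_prefix_def p_def by auto
  next
    case False
    then have "2 \<le> h" "\<sigma> h = h - 1"
      using I(2) assms(2) by (auto simp: shift_fun_def)
    moreover have "\<tau> h = \<sigma> h"
      using above assms(2) by simp
    ultimately show ?thesis
      using False below unfolding fixes_prefix_def p_def by auto
  qed
qed

theorem lemma5p4:
  fixes m :: nat and G :: "nat \<Rightarrow> graph" and T :: "nat \<Rightarrow> jtree"
    and \<sigma> :: "nat \<Rightarrow> nat" and h :: nat
  assumes "m \<ge> 1"
    and "\<And>j. j \<in> {1..m} \<Longrightarrow> subgraph_of_path (G j)"
    and "\<And>j. j \<in> {1..m} \<Longrightarrow> join_tree (G j) (T j)"
    and "shift_perm m \<sigma>"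
    and "h \<in> {1..m}"
  shows
    "Psi (multi_join (map T [1..<m+1]))
       \<ge> Psi (T (\<sigma> 1)) + dvec_c (G (\<sigma> 1)) (map (\<lambda>i. G (\<sigma> i)) [2..<m+1])
     \<and>
     Psi (multi_join (map T [1..<m+1]))
       \<ge> Psi (T (\<sigma> h)) + dvec_c (\<Union>i\<in>{1..h}. G (\<sigma> i)) (map (\<lambda>i. G (\<sigma> i)) [h+1..<m+1])
     \<and>
     (let j = \<sigma> h; F = (\<Union>i\<in>{1..h-1}. G (\<sigma> i)) in
     int (Psi (multi_join (map T [1..<m+1])))
       \<ge> int (Psi (tminus (T j) F)) - int (n_comp (gminus (G j) F))
         + int (dvec (map (\<lambda>i. G (sigma_tilde m \<sigma> j i)) [1..<m+1])))"
proof -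
  have "label (T i) = G i \<and> {} \<notin> G i \<and> finite (G i)" if "i \<in> {1..m}" for i
    using assms(2,3)[OF that] unfolding join_tree_def subgraph_of_path_def path_Z_def by auto
  then have trees: "\<forall>i\<in>{1..m}. label (T i) = G i" "\<forall>i\<in>{1..m}. {} \<notin> G i"
    "\<forall>i\<in>{1..m}. finite (G i)"
    by simp_all
  have \<sigma>: "shift_inj m \<sigma>"
    using assms(4) by (rule shift_perm_imp_shift_inj)
  define j where "j = \<sigma> h"
  define F where "F = (\<Union>i\<in>{1..h-1}. G (\<sigma> i))"
  define \<tau> where "\<tau> = sigma_tilde m \<sigma> j"
  note \<tau> = sigma_tilde_shift_perm[OF assms(4,5), folded j_def, folded \<tau>_def]
  have "{1..h-1} = {1..<h}"
    using assms(5) by auto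
  then have "F = (\<Union>x\<in>\<sigma> ` {1..<h}. G x)"
    unfolding F_def by simp
  also have "\<dots> = (\<Union>i\<in>{1..<h}. G (\<tau> i))"
    unfolding \<tau>(4)[symmetric] by simp
  finally have "F = (\<Union>i\<in>{1..<h}. G (\<tau> i))" .
  then have "Psi (tminus (T j) F) + dvec (map (\<lambda>i. G (\<tau> i)) [1..<m+1])
      \<le> Psi (join_all T m) + n_comp (gminus (G j) F)"
    using Psi_join_all_ge_tminus[OF \<tau>(1) assms(5) \<tau>(2) trees] \<tau>(3) by simp
  moreover have "Psi (T (\<sigma> 1)) + dvec_c (G (\<sigma> 1)) (map (\<lambda>i. G (\<sigma> i)) [2..<m+1]) \<le> Psi (join_all T m)"
    using Psi_join_all_ge[OF \<sigma> _ trees(1,2), of 1] assms(1) by (simp add: numeral_2_eq_2 del: upt_Suc)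
  ultimately show ?thesis
    using Psi_join_all_ge[OF \<sigma> assms(5) trees(1,2)]
    unfolding Let_def j_def[symmetric] F_def[symmetric] \<tau>_def[symmetric] by linarith
qed

end
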